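(* Under the hypotheses of Theorem 2 (assumptions (A), (C), and $\omega_1'\ge1$ for some $k\in(0,\beta)$, $p,q>0$, $p+q\le1$, with $\theta'=\min\{(\omega_1'-1)/2,(1-p-q)/\omega_2\}$), for every $\mathbf{x}_0=(u_1,u_0)^\top\in\mathrm{Dom}(\mathcal{A})$ the function $\mathbf{x}(t)=(w(t),u(t))^\top=\mathcal{T}(t)\mathbf{x}_0$ lies in $\mathrm{Dom}(\mathcal{A})$ and satisfies $\mathbf{x}'(t)=\mathcal{A}\mathbf{x}(t)$; $u(t)$ is a solution of $u''(t)+Du'(t)+\tilde Au(t)=0$ with $u(0)=u_0$, $u'(0)=u_1$, and there is a constant $C>0$ with \[ \|u(t)\|_1^2+\|u'(t)\|^2\le Ce^{-2k\theta' t}\bigl(\|u_0\|_1^2+\|u_1\|^2\bigr)\qquad\text{for all }t\ge0 . \]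
   Context: $H$ is a complex Hilbert space with inner product $(\cdot,\cdot)$ and norm $\|\cdot\|$; $\mathcal{L}(X,Y)$ denotes bounded operators from $X$ to $Y$. Assumption (A): $A:\mathrm{Dom}(A)\subset H\to H$ is m-sectorial (densely defined, numerical range in a sector $\{|\mathrm{Im}\,z|\le\tan(\omega)\,\mathrm{Re}\,z\}$ for some $\omega\in[0,\pi/2)$, no proper sectorial extension), and $\mathrm{Re}(Ax,x)\ge a_0\|x\|^2$ for some $a_0>0$ and all $x\in\mathrm{Dom}(A)$. Then there are a self-adjoint positive definite $T$ (with $T\ge a_0$) and a bounded self-adjoint $S$ on $H$ with $A=T^{1/2}(I+iS)T^{1/2}$. For $s\ge0$, $H_s=\mathrm{Dom}(T^{s/2})$ with norm $\|x\|_s=\|T^{s/2}x\|$; for $s<0$, $H_s$ is the completion of $H$ in $\|x\|_s=\|T^{s/2}x\|$. $(\cdot,\cdot)_{-1,1}$ is the duality pairing on $H_{-1}\times H_1$ extending $(\cdot,\cdot)$. $\tilde A\in\mathcal{L}(H_1,H_{-1})$ is the continuous extension of $A$; $\tilde S=T^{1/2}ST^{1/2}\in\mathcal{L}(H_1,H_{-1})$. Assumption (C): $D\in\mathcal{L}(H_1,H_{-1})$ and $\delta=\inf_{x\in H_1,x\ne0}\mathrm{Re}(Dx,x)_{-1,1}/\|x\|_1^2>0$; $\beta=\inf_{x\in H_1,x\ne0}\mathrm{Re}(Dx,x)_{-1,1}/\|x\|^2>0$. Put $D'=T^{-1/2}DT^{-1/2}\in\mathcal{L}(H)$, $D_1=\tfrac12T^{1/2}(D'+D'^*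 )T^{1/2}$, $D_2=\tfrac1{2i}T^{1/2}(D'-D'^* )T^{1/2}$. $\|\tilde S\|$, $\|D_2\|$ are norms in $\mathcal{L}(H_1,H_{-1})$. $\omega_1'=a_0(\delta/k-\|\tilde S\|^2/(4pk^2)-\|D_2\|^2/(4q))$ and $\omega_2=\sup_{x\in H_1,x\ne0}[\|x\|_1^2+k(D_1x,x)_{-1,1}+k^2\|x\|^2]/\|x\|_1^2$. Energy space $\mathcal{H}=H\times H_1$ with $\|(x_1,x_2)^\top\|_{\mathcal{H}}^2=\|x_1\|^2+\|x_2\|_1^2$; $\mathcal{A}(x_1,x_2)^\top=(-Dx_1-\tilde Ax_2,\;x_1)^\top$ with $\mathrm{Dom}(\mathcal{A})=\{(x_1,x_2)^\top: x_1,x_2\in H_1,\ Dx_1+\tilde Ax_2\in H\}$; $\mathcal{T}(t)=\exp(t\mathcal{A})$ is the $C_0$-semigroup generated by $\mathcal{A}$ (which exists by Theorem 2). A solution of $u''+Du'+\tilde Au=0$ is a function $u(t)\in H_1$ with $u'(t)\in H_1$, $u''(t)\in H$, $Du'(t)+\tilde Au(t)\in H$ and $u''(t)+Du'(t)+\tilde Au(t)=0$. *)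

theory Defs
  imports "HOL-Analysis.Analysis"
begin

class complex_vector = real_vector +
  fixes scaleC :: "complex \<Rightarrow> 'a \<Rightarrow> 'a" (infixr "*\<^sub>C" 75)
  assumes scaleC_add_right: "a *\<^sub>C (x + y) = a *\<^sub>C x + a *\<^sub>C y"
    and scaleC_add_left: "(a + b) *\<^sub>C x = a *\<^sub>C x + b *\<^sub>C x"
    and scaleC_scaleC: "a *\<^sub>C (b *\<^sub>C x) = (a * b) *\<^sub>C x"
    and scaleC_one: "1 *\<^sub>C x = x"
    and scaleR_scaleC: "r *\<^sub>R x = complex_of_real r *\<^sub>C x"

class complex_normed_vector = complex_vector + real_normed_vector +
  assumes norm_scaleC: "norm (a *\<^sub>C x) = cmod a * norm x"

text \<open>The complex Hilbert space H is a type 'a of class complex_normed_vector + banach,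
  together with an inner product ip, linear in the first and conjugate-linear in the
  second argument, which induces the norm.  Unbounded operators are pairs (domain V, map f).\<close>

definition is_cinner :: "('a::{complex_normed_vector,banach} \<Rightarrow> 'a \<Rightarrow> complex) \<Rightarrow> bool" where
  "is_cinner ip \<longleftrightarrow>
     (\<forall>x y z. ip (x + y) z = ip x z + ip y z) \<and>
     (\<forall>c x y. ip (c *\<^sub>C x) y = c * ip x y) \<and>
     (\<forall>x y. ip y x = cnj (ip x y)) \<and>
     (\<forall>x. ip x x = complex_of_real ((norm x)\<^sup>2))"

definition csubspace_on :: "'a::complex_vector set \<Rightarrow> bool" where
  "csubspace_on V \<longleftrightarrow> 0 \<in> V \<and> (\<forall>x\<in>V. \<forall>y\<in>V. x + y \<in> V) \<and> (\<forall>c. \<forall>x\<in>V. c *\<^sub>C x \<in> V)"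

definition clinear_on :: "'a::complex_vector set \<Rightarrow> ('a \<Rightarrow> 'b::complex_vector) \<Rightarrow> bool" where
  "clinear_on V f \<longleftrightarrow> (\<forall>x\<in>V. \<forall>y\<in>V. f (x + y) = f x + f y) \<and> (\<forall>c. \<forall>x\<in>V. f (c *\<^sub>C x) = c *\<^sub>C f x)"

definition lin_op :: "'a::complex_vector set \<Rightarrow> ('a \<Rightarrow> 'a) \<Rightarrow> bool" where
  "lin_op V f \<longleftrightarrow> csubspace_on V \<and> clinear_on V f"

definition densely_defined :: "'a::complex_normed_vector set \<Rightarrow> bool" where
  "densely_defined V \<longleftrightarrow> closure V = UNIV"

definition sectorial :: "('a \<Rightarrow> 'a \<Rightarrow> complex) \<Rightarrow> 'a set \<Rightarrow> ('a \<Rightarrow> 'a) \<Rightarrow> real \<Rightarrow> bool" where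
  "sectorial ip V f \<omega> \<longleftrightarrow> (\<forall>x\<in>V. \<bar>Im (ip (f x) x)\<bar> \<le> tan \<omega> * Re (ip (f x) x))"

definition m_sectorial :: "('a::complex_normed_vector \<Rightarrow> 'a \<Rightarrow> complex) \<Rightarrow> 'a set \<Rightarrow> ('a \<Rightarrow> 'a) \<Rightarrow> bool" where
  "m_sectorial ip V f \<longleftrightarrow>
     lin_op V f \<and> densely_defined V \<and>
     (\<exists>\<omega>. 0 \<le> \<omega> \<and> \<omega> < pi / 2 \<and> sectorial ip V f \<omega>) \<and>
     \<not> (\<exists>V' g \<omega>'. lin_op V' g \<and> V \<subset> V' \<and> (\<forall>x\<in>V. g x = f x) \<and>
          0 \<le> \<omega>' \<and> \<omega>' < pi / 2 \<and> sectorial ip V' g \<omega>')"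

text \<open>Self-adjoint (unbounded) operator: densely defined, symmetric, and Dom(f^*) \<subseteq> Dom(f).\<close>
definition self_adjoint_op :: "('a::complex_normed_vector \<Rightarrow> 'a \<Rightarrow> complex) \<Rightarrow> 'a set \<Rightarrow> ('a \<Rightarrow> 'a) \<Rightarrow> bool" where
  "self_adjoint_op ip V f \<longleftrightarrow>
     lin_op V f \<and> densely_defined V \<and>
     (\<forall>x\<in>V. \<forall>y\<in>V. ip (f x) y = ip x (f y)) \<and>
     (\<forall>y. (\<exists>z. \<forall>x\<in>V. ip (f x) y = ip x z) \<longrightarrow> y \<in> V)"

definition positive_op :: "('a \<Rightarrow> 'a \<Rightarrow> complex) \<Rightarrow> 'a set \<Rightarrow> ('a \<Rightarrow> 'a) \<Rightarrow> bool" where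
  "positive_op ip V f \<longleftrightarrow> (\<forall>x\<in>V. 0 \<le> Re (ip (f x) x))"

definition bounded_clinear_op :: "('a::complex_normed_vector \<Rightarrow> 'a) \<Rightarrow> bool" where
  "bounded_clinear_op f \<longleftrightarrow> clinear_on UNIV f \<and> (\<exists>K. \<forall>x. norm (f x) \<le> K * norm x)"

definition is_sqrt_op :: "('a::complex_normed_vector \<Rightarrow> 'a \<Rightarrow> complex) \<Rightarrow> 'a set \<Rightarrow> ('a \<Rightarrow> 'a) \<Rightarrow> 'a set \<Rightarrow> ('a \<Rightarrow> 'a) \<Rightarrow> bool" where
  "is_sqrt_op ip VR R VT T \<longleftrightarrow>
     self_adjoint_op ip VR R \<and> positive_op ip VR R \<and>
     VT = {x \<in> VR. R x \<in> VR} \<and> (\<forall>x\<in>VT. T x = R (R x))"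

text \<open>D is represented through D' = T^(-1/2) D T^(-1/2)
  (a bounded operator on H), so (Dx,y)_{-1,1} = (D' R x, R y) with R = T^(1/2);
  Dps is the Hilbert adjoint D'^*.  ||x||_1 = ||R x||, and ||z||_{-1} = ||T^(-1/2) z||.\<close>

definition delta_C :: "('a::complex_normed_vector \<Rightarrow> 'a \<Rightarrow> complex) \<Rightarrow> 'a set \<Rightarrow> ('a \<Rightarrow> 'a) \<Rightarrow> ('a \<Rightarrow> 'a) \<Rightarrow> real" where
  "delta_C ip VR R Dp = (INF x\<in>VR - {0}. Re (ip (Dp (R x)) (R x)) / (norm (R x))\<^sup>2)"

definition beta_C :: "('a::complex_normed_vector \<Rightarrow> 'a \<Rightarrow> complex) \<Rightarrow> 'a set \<Rightarrow> ('a \<Rightarrow> 'a) \<Rightarrow> ('a \<Rightarrow> 'a) \<Rightarrow> real" where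
  "beta_C ip VR R Dp = (INF x\<in>VR - {0}. Re (ip (Dp (R x)) (R x)) / (norm x)\<^sup>2)"

text \<open>Norm of S~ = T^(1/2) S T^(1/2) in L(H_1,H_{-1}).\<close>
definition normS_tilde :: "'a::complex_normed_vector set \<Rightarrow> ('a \<Rightarrow> 'a) \<Rightarrow> ('a \<Rightarrow> 'a) \<Rightarrow> real" where
  "normS_tilde VR R S = (SUP x\<in>VR - {0}. norm (S (R x)) / norm (R x))"

text \<open>Norm of D_2 = (1/(2i)) T^(1/2)(D' - D'^*)T^(1/2) in L(H_1,H_{-1}).\<close>
definition normD2 :: "'a::complex_normed_vector set \<Rightarrow> ('a \<Rightarrow> 'a) \<Rightarrow> ('a \<Rightarrow> 'a) \<Rightarrow> ('a \<Rightarrow> 'a) \<Rightarrow> real" where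
  "normD2 VR R Dp Dps = (SUP x\<in>VR - {0}. norm ((1 / (2 * \<i>)) *\<^sub>C (Dp (R x) - Dps (R x))) / norm (R x))"

definition omega1' :: "('a::complex_normed_vector \<Rightarrow> 'a \<Rightarrow> complex) \<Rightarrow> 'a set \<Rightarrow> ('a \<Rightarrow> 'a) \<Rightarrow> ('a \<Rightarrow> 'a) \<Rightarrow> ('a \<Rightarrow> 'a)
    \<Rightarrow> ('a \<Rightarrow> 'a) \<Rightarrow> real \<Rightarrow> real \<Rightarrow> real \<Rightarrow> real \<Rightarrow> real" where
  "omega1' ip VR R S Dp Dps a0 k p q =
     a0 * (delta_C ip VR R Dp / k - (normS_tilde VR R S)\<^sup>2 / (4 * p * k\<^sup>2)
           - (normD2 VR R Dp Dps)\<^sup>2 / (4 * q))"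

text \<open>(D_1 x, x)_{-1,1} = ((1/2)(D' + D'^*) R x, R x).\<close>
definition omega2 :: "('a::complex_normed_vector \<Rightarrow> 'a \<Rightarrow> complex) \<Rightarrow> 'a set \<Rightarrow> ('a \<Rightarrow> 'a) \<Rightarrow> ('a \<Rightarrow> 'a) \<Rightarrow> ('a \<Rightarrow> 'a)
    \<Rightarrow> real \<Rightarrow> real" where
  "omega2 ip VR R Dp Dps k =
     (SUP x\<in>VR - {0}. ((norm (R x))\<^sup>2
        + k * Re (ip ((1/2) *\<^sub>C (Dp (R x) + Dps (R x))) (R x)) + k\<^sup>2 * (norm x)\<^sup>2) / (norm (R x))\<^sup>2)"

definition theta' :: "('a::complex_normed_vector \<Rightarrow> 'a \<Rightarrow> complex) \<Rightarrow> 'a set \<Rightarrow> ('a \<Rightarrow> 'a) \<Rightarrow> ('a \<Rightarrow> 'a) \<Rightarrow> ('a \<Rightarrow> 'a)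
    \<Rightarrow> ('a \<Rightarrow> 'a) \<Rightarrow> real \<Rightarrow> real \<Rightarrow> real \<Rightarrow> real \<Rightarrow> real" where
  "theta' ip VR R S Dp Dps a0 k p q =
     min ((omega1' ip VR R S Dp Dps a0 k p q - 1) / 2) ((1 - p - q) / omega2 ip VR R Dp Dps k)"

text \<open>Energy space \<H> = H \<times> H_1 (carrier UNIV \<times> VR) and its norm.\<close>
definition Hsp :: "'a set \<Rightarrow> ('a \<times> 'a) set" where
  "Hsp VR = UNIV \<times> VR"

definition hnorm :: "('a::complex_normed_vector \<Rightarrow> 'a) \<Rightarrow> 'a \<times> 'a \<Rightarrow> real" where
  "hnorm R z = sqrt ((norm (fst z))\<^sup>2 + (norm (R (snd z)))\<^sup>2)"

text \<open>The operator \<A> and its domain; D x_1 + A~ x_2 = T^(1/2)(D' R x_1 + (I + iS) R x_2)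
  lies in H iff D' R x_1 + (I + iS) R x_2 \<in> Dom(T^(1/2)).\<close>
definition dom_calA :: "'a::complex_normed_vector set \<Rightarrow> ('a \<Rightarrow> 'a) \<Rightarrow> ('a \<Rightarrow> 'a) \<Rightarrow> ('a \<Rightarrow> 'a) \<Rightarrow> ('a \<times> 'a) set" where
  "dom_calA VR R S Dp = {(x1, x2). x1 \<in> VR \<and> x2 \<in> VR \<and>
       Dp (R x1) + (R x2 + \<i> *\<^sub>C S (R x2)) \<in> VR}"

definition calA :: "('a::complex_normed_vector \<Rightarrow> 'a) \<Rightarrow> ('a \<Rightarrow> 'a) \<Rightarrow> ('a \<Rightarrow> 'a) \<Rightarrow> 'a \<times> 'a \<Rightarrow> 'a \<times> 'a" where
  "calA R S Dp z = (- R (Dp (R (fst z)) + (R (snd z) + \<i> *\<^sub>C S (R (snd z)))), fst z)"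

definition pscaleC :: "complex \<Rightarrow> 'a::complex_vector \<times> 'a \<Rightarrow> 'a \<times> 'a" where
  "pscaleC c z = (c *\<^sub>C fst z, c *\<^sub>C snd z)"

definition C0_semigroup :: "'a::complex_normed_vector set \<Rightarrow> ('a \<Rightarrow> 'a) \<Rightarrow> (real \<Rightarrow> 'a \<times> 'a \<Rightarrow> 'a \<times> 'a) \<Rightarrow> bool" where
  "C0_semigroup VR R Tsg \<longleftrightarrow>
     (\<forall>t\<ge>0. \<forall>z\<in>Hsp VR. Tsg t z \<in> Hsp VR) \<and>
     (\<forall>t\<ge>0. \<forall>z\<in>Hsp VR. \<forall>w\<in>Hsp VR. Tsg t (z + w) = Tsg t z + Tsg t w) \<and>
     (\<forall>t\<ge>0. \<forall>c. \<forall>z\<in>Hsp VR. Tsg t (pscaleC c z) = pscaleC c (Tsg t z)) \<and>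
     (\<forall>t\<ge>0. \<exists>K. \<forall>z\<in>Hsp VR. hnorm R (Tsg t z) \<le> K * hnorm R z) \<and>
     (\<forall>z\<in>Hsp VR. Tsg 0 z = z) \<and>
     (\<forall>s\<ge>0. \<forall>t\<ge>0. \<forall>z\<in>Hsp VR. Tsg (s + t) z = Tsg s (Tsg t z)) \<and>
     (\<forall>z\<in>Hsp VR. ((\<lambda>t. hnorm R (Tsg t z - z)) \<longlongrightarrow> 0) (at_right 0))"

definition generated_by :: "'a::complex_normed_vector set \<Rightarrow> ('a \<Rightarrow> 'a) \<Rightarrow> (real \<Rightarrow> 'a \<times> 'a \<Rightarrow> 'a \<times> 'a)
    \<Rightarrow> ('a \<times> 'a) set \<Rightarrow> ('a \<times> 'a \<Rightarrow> 'a \<times> 'a) \<Rightarrow> bool" where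
  "generated_by VR R Tsg Dom G \<longleftrightarrow>
     C0_semigroup VR R Tsg \<and> Dom \<subseteq> Hsp VR \<and> (\<forall>z\<in>Dom. G z \<in> Hsp VR) \<and>
     Dom = {z \<in> Hsp VR. \<exists>y\<in>Hsp VR.
              ((\<lambda>t. hnorm R ((1 / t) *\<^sub>R (Tsg t z - z) - y)) \<longlongrightarrow> 0) (at_right 0)} \<and>
     (\<forall>z\<in>Dom. ((\<lambda>t. hnorm R ((1 / t) *\<^sub>R (Tsg t z - z) - G z)) \<longlongrightarrow> 0) (at_right 0))"

definition has_deriv_N :: "('b \<Rightarrow> real) \<Rightarrow> (real \<Rightarrow> 'b::real_vector) \<Rightarrow> 'b \<Rightarrow> real \<Rightarrow> bool" where
  "has_deriv_N N f f' t \<longleftrightarrow>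
     ((\<lambda>s. N ((1 / (s - t)) *\<^sub>R (f s - f t) - f')) \<longlongrightarrow> 0) (at t within {0..})"

definition is_solution :: "'a::complex_normed_vector set \<Rightarrow> ('a \<Rightarrow> 'a) \<Rightarrow> ('a \<Rightarrow> 'a) \<Rightarrow> ('a \<Rightarrow> 'a)
    \<Rightarrow> (real \<Rightarrow> 'a) \<Rightarrow> (real \<Rightarrow> 'a) \<Rightarrow> (real \<Rightarrow> 'a) \<Rightarrow> bool" where
  "is_solution VR R S Dp u u' u'' \<longleftrightarrow>
     (\<forall>t\<ge>0. u t \<in> VR \<and> u' t \<in> VR \<and>
        has_deriv_N (\<lambda>x. norm (R x)) u (u' t) t \<and>
        has_deriv_N norm u' (u'' t) t \<and>
        Dp (R (u' t)) + (R (u t) + \<i> *\<^sub>C S (R (u t))) \<in> VR \<and>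
        u'' t + R (Dp (R (u' t)) + (R (u t) + \<i> *\<^sub>C S (R (u t)))) = 0)"

end

theory Submission
  imports Defs
begin

text \<open>
  The equation is the first-order system x' = \<A> x on the energy space H x H_1, whose
  solutions are the orbits of the semigroup T(t) generated by \<A>.  Decay is obtained from
  the Lyapunov functional
    V(x_1,x_2) = |x_1|^2 + 2k Re(x_1,x_2) + |x_2|_1^2 + k Re(D x_2,x_2)_{-1,1},
  which is equivalent to the squared energy norm because k < beta, and which satisfies
  dV/dt <= -2k theta' V along orbits; this is where omega_1' >= 1 and p + q <= 1 enter.
  A comparison argument then gives V(T(t)x) <= exp(-2k theta' t) V(x).
\<close>

lemma quadratic_nonneg_linear_zero:
  fixes r N :: real
  assumes "N \<ge> 0" and "\<And>t. 0 \<le> 2 * t * r + t\<^sup>2 * N"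
  shows "r = 0"
proof (rule ccontr)
  assume "r \<noteq> 0"
  define s where "s = r / (N + 1)"
  have r: "r = s * (N + 1)" using assms(1) by (simp add: s_def)
  have "s \<noteq> 0" using \<open>r \<noteq> 0\<close> r by auto
  have "2 * (- s) * r + (- s)\<^sup>2 * N = - (s\<^sup>2 * (N + 2))"
    unfolding r by (simp add: power2_eq_square algebra_simps)
  also have "\<dots> < 0" using \<open>s \<noteq> 0\<close> assms(1) by (simp add: add_nonneg_pos)
  finally show False using assms(2) by (metis not_le)
qed

lemma tendsto_at_nonneg_split:
  fixes g :: "real \<Rightarrow> 'b::topological_space"
  assumes "(g \<longlongrightarrow> l) (at_right t)" and "t > 0 \<Longrightarrow> (g \<longlongrightarrow> l) (at_left t)" and "t \<ge> 0"
  shows "(g \<longlongrightarrow> l) (at t within {0..})"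
proof (cases "t = 0")
  case True
  then show ?thesis using assms(1) at_within_Ici_at_right[of t] by simp
next
  case False
  then have "t > 0" using assms(3) by simp
  then have "(g \<longlongrightarrow> l) (at t)" using assms(1,2) filterlim_at_split by blast
  then show ?thesis by (rule tendsto_within_subset) simp
qed

lemma filterlim_reflect_at_left:
  fixes t :: real
  shows "filterlim (\<lambda>s. t - s) (at_right 0) (at_left t)"
  unfolding filterlim_at
proof
  show "\<forall>\<^sub>F s in at_left t. t - s \<in> {0<..} \<and> t - s \<noteq> 0"
    by (simp add: eventually_at_filter)
  show "((\<lambda>s. t - s) \<longlongrightarrow> 0) (at_left t)" by (intro tendsto_eq_intros) auto
qed

lemma INF_quotient_le:
  fixes g h :: "'b \<Rightarrow> real"
  assumes "x \<in> A" and "h x > 0" and "bdd_below ((\<lambda>y. g y / h y) ` A)"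
  shows "(INF y\<in>A. g y / h y) * h x \<le> g x"
proof -
  have "(INF y\<in>A. g y / h y) \<le> g x / h x" using assms by (intro cINF_lower) auto
  then show ?thesis using assms(2) by (simp add: le_divide_eq)
qed

lemma SUP_quotient_ge:
  fixes g h :: "'b \<Rightarrow> real"
  assumes "x \<in> A" and "h x > 0" and "bdd_above ((\<lambda>y. g y / h y) ` A)"
  shows "g x \<le> (SUP y\<in>A. g y / h y) * h x"
proof -
  have "g x / h x \<le> (SUP y\<in>A. g y / h y)" using assms by (intro cSUP_upper) auto
  then show ?thesis using assms(2) by (simp add: divide_le_eq)
qed

lemma bdd_quotients:
  fixes g h :: "'b \<Rightarrow> real"
  assumes "\<And>y. y \<in> A \<Longrightarrow> \<bar>g y\<bar> \<le> K * h y" and "\<And>y. y \<in> A \<Longrightarrow> h y > 0"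
  shows "bdd_above ((\<lambda>y. g y / h y) ` A)" and "bdd_below ((\<lambda>y. g y / h y) ` A)"
proof -
  have q: "\<bar>g y / h y\<bar> \<le> K" if "y \<in> A" for y
    using assms[OF that] by (simp add: abs_divide divide_le_eq)
  show "bdd_above ((\<lambda>y. g y / h y) ` A)"
  proof (rule bdd_aboveI[of _ K])
    fix v assume "v \<in> (\<lambda>y. g y / h y) ` A"
    then show "v \<le> K" using q abs_le_D1 by blast
  qed
  show "bdd_below ((\<lambda>y. g y / h y) ` A)"
  proof (rule bdd_belowI[of _ "- K"])
    fix v assume "v \<in> (\<lambda>y. g y / h y) ` A"
    then show "- K \<le> v" using q abs_le_D2 by fastforce
  qed
qed

lemma young: fixes u v c :: real assumes "c > 0" shows "2 * u * v \<le> c * v\<^sup>2 + u\<^sup>2 / c"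
proof -
  have "0 \<le> (c * v - u)\<^sup>2 / c" using assms by simp
  also have "(c * v - u)\<^sup>2 / c = c * v\<^sup>2 - 2 * u * v + u\<^sup>2 / c"
    using assms by (simp add: power2_eq_square field_simps)
  finally show ?thesis by simp
qed

text \<open>Comparison: a function with g' <= -c g on [0,oo) satisfies g(t) <= exp(-c t) g(0),
  because exp(c s) g(s) is non-increasing.\<close>
lemma decay_comparison:
  fixes g g' :: "real \<Rightarrow> real"
  assumes der: "\<And>s. s \<ge> 0 \<Longrightarrow> (g has_real_derivative g' s) (at s within {0..})"
    and ineq: "\<And>s. s \<ge> 0 \<Longrightarrow> g' s \<le> - c * g s" and t: "t \<ge> 0"
  shows "g t \<le> exp (- c * t) * g 0"
proof -
  define h where "h s = exp (c * s) * g s" for s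
  have hder: "(h has_real_derivative exp (c * s) * (c * g s + g' s)) (at s within {0..})"
    if "s \<ge> 0" for s
    unfolding h_def using der[OF that]
    by (auto intro!: derivative_eq_intros simp: algebra_simps)
  have "h t \<le> h 0"
  proof (rule DERIV_nonpos_imp_decreasing_open[OF t])
    fix s :: real assume s: "0 < s" "s < t"
    then have "at s within {0..} = at s" by (intro at_within_interior) simp
    then show "\<exists>y. DERIV h s :> y \<and> y \<le> 0"
      using hder[of s] ineq[of s] s by (auto intro!: mult_nonneg_nonpos)
  next
    show "continuous_on {0..t} h"
      unfolding continuous_on_eq_continuous_within
    proof
      fix s assume "s \<in> {0..t}"
      then have "continuous (at s within {0..}) h" using DERIV_continuous[OF hder[of s]] by simp
      then show "continuous (at s within {0..t}) h" by (rule continuous_within_subset) auto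
    qed
  qed
  then have "exp (c * t) * g t \<le> g 0" by (simp add: h_def)
  then show ?thesis by (simp add: exp_minus field_simps)
qed

section \<open>Linear operators on subspaces\<close>

lemma scaleC_zero_left [simp]: "(0::complex) *\<^sub>C x = 0"
  using scaleR_scaleC[of 0 x] by simp

lemma scaleC_zero_right [simp]: "c *\<^sub>C (0::'a::complex_vector) = 0"
  using scaleC_add_right[of c 0 0] by simp

lemma scaleC_minus_one [simp]: "(- 1::complex) *\<^sub>C x = - x"
  using scaleR_scaleC[of "- 1" x] by simp

locale linear_on =
  fixes V :: "'a::complex_vector set" and f :: "'a \<Rightarrow> 'a"
  assumes lin: "lin_op V f"
begin

lemma add_mem: "x \<in> V \<Longrightarrow> y \<in> V \<Longrightarrow> x + y \<in> V"
  using lin unfolding lin_op_def csubspace_on_def by blast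

lemma scaleC_mem: "x \<in> V \<Longrightarrow> c *\<^sub>C x \<in> V"
  using lin unfolding lin_op_def csubspace_on_def by blast

lemma scaleR_mem: "x \<in> V \<Longrightarrow> r *\<^sub>R x \<in> V"
  by (simp add: scaleR_scaleC scaleC_mem)

lemma zero_mem: "0 \<in> V"
  using lin unfolding lin_op_def csubspace_on_def by blast

lemma diff_mem: "x \<in> V \<Longrightarrow> y \<in> V \<Longrightarrow> x - y \<in> V"
  using add_mem[of x "(- 1) *\<^sub>C y"] scaleC_mem[of y "- 1"] by simp

lemma map_add: "x \<in> V \<Longrightarrow> y \<in> V \<Longrightarrow> f (x + y) = f x + f y"
  using lin unfolding lin_op_def clinear_on_def by blast

lemma map_scaleC: "x \<in> V \<Longrightarrow> f (c *\<^sub>C x) = c *\<^sub>C f x"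
  using lin unfolding lin_op_def clinear_on_def by blast

lemma map_scaleR: "x \<in> V \<Longrightarrow> f (r *\<^sub>R x) = r *\<^sub>R f x"
  by (simp add: scaleR_scaleC map_scaleC)

lemma map_zero: "f 0 = 0"
  using map_scaleC[OF zero_mem, of 0] by simp

lemma map_diff: "x \<in> V \<Longrightarrow> y \<in> V \<Longrightarrow> f (x - y) = f x - f y"
  using map_add[of x "(- 1) *\<^sub>C y"] map_scaleC[of y "- 1"] scaleC_mem[of y "- 1"] by simp

end

lemma bounded_clinear_op_linear_on: "bounded_clinear_op f \<Longrightarrow> linear_on UNIV f"
  unfolding bounded_clinear_op_def linear_on_def lin_op_def csubspace_on_def by blast

lemma bounded_clinear_op_bound:
  assumes "bounded_clinear_op f"
  shows "\<exists>K\<ge>0. \<forall>x. norm (f x) \<le> K * norm x"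
proof -
  obtain K where K: "\<And>x. norm (f x) \<le> K * norm x"
    using assms unfolding bounded_clinear_op_def by blast
  have "norm (f x) \<le> max K 0 * norm x" for x
    using K[of x] by (meson max.cobounded1 mult_right_mono norm_ge_zero order_trans)
  then show ?thesis by (intro exI[of _ "max K 0"]) simp
qed

section \<open>The inner product\<close>

locale hilbert_ip =
  fixes ip :: "'a::{complex_normed_vector,banach} \<Rightarrow> 'a \<Rightarrow> complex"
  assumes hilbert: "is_cinner ip"
begin

lemma ip_add_left: "ip (x + y) z = ip x z + ip y z"
  using hilbert unfolding is_cinner_def by blast

lemma ip_scaleC_left: "ip (c *\<^sub>C x) y = c * ip x y"
  using hilbert unfolding is_cinner_def by blast

lemma ip_sym: "ip y x = cnj (ip x y)"
  using hilbert unfolding is_cinner_def by blast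

lemma ip_self: "ip x x = complex_of_real ((norm x)\<^sup>2)"
  using hilbert unfolding is_cinner_def by blast

lemma ip_add_right: "ip z (x + y) = ip z x + ip z y"
  by (metis complex_cnj_add ip_add_left ip_sym)

lemma ip_scaleC_right: "ip x (c *\<^sub>C y) = cnj c * ip x y"
  by (metis complex_cnj_mult ip_scaleC_left ip_sym)

lemma ip_scaleR_right: "ip x (r *\<^sub>R y) = complex_of_real r * ip x y"
  by (simp add: scaleR_scaleC ip_scaleC_right)

lemma ip_scaleR_left: "ip (r *\<^sub>R x) y = complex_of_real r * ip x y"
  by (simp add: scaleR_scaleC ip_scaleC_left)

lemma ip_minus_left: "ip (- x) y = - ip x y"
  using ip_scaleC_left[of "- 1" x y] by simp

lemma ip_minus_right: "ip x (- y) = - ip x y"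
  using ip_scaleC_right[of x "- 1" y] by simp

lemma ip_diff_left: "ip (x - y) z = ip x z - ip y z"
  by (simp only: diff_conv_add_uminus ip_add_left ip_minus_left)

lemma ip_diff_right: "ip z (x - y) = ip z x - ip z y"
  by (simp only: diff_conv_add_uminus ip_add_right ip_minus_right)

lemma ip_zero_left [simp]: "ip 0 y = 0"
  using ip_scaleC_left[of 0 0 y] by simp

lemma ip_zero_right [simp]: "ip x 0 = 0"
  using ip_sym[of 0 x] by simp

lemma Re_ip_self: "Re (ip x x) = (norm x)\<^sup>2"
  by (simp add: ip_self)

lemma Re_ip_sym: "Re (ip y x) = Re (ip x y)"
  by (subst ip_sym) simp

lemma norm_add_sq: "(norm (x + y))\<^sup>2 = (norm x)\<^sup>2 + 2 * Re (ip x y) + (norm y)\<^sup>2"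
proof -
  have "Re (ip (x + y) (x + y)) = Re (ip x x) + Re (ip x y) + Re (ip y x) + Re (ip y y)"
    by (simp add: ip_add_left ip_add_right)
  then show ?thesis by (simp add: Re_ip_self Re_ip_sym)
qed

lemma norm_diff_sq: "(norm (x - y))\<^sup>2 = (norm x)\<^sup>2 - 2 * Re (ip x y) + (norm y)\<^sup>2"
  using norm_add_sq[of x "- y"] by (simp add: ip_minus_right)

lemma parallelogram: "(norm ((x::'a) + y))\<^sup>2 + (norm (x - y))\<^sup>2 = 2 * (norm x)\<^sup>2 + 2 * (norm y)\<^sup>2"
  using norm_add_sq[of x y] norm_diff_sq[of x y] by linarith

text \<open>Cauchy--Schwarz, from 0 <= |x - a y|^2 with the optimal a = (x,y)/|y|^2.\<close>
lemma cauchy_schwarz: "cmod (ip x y) \<le> norm x * norm y"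
proof (cases "y = 0")
  case True
  then show ?thesis by simp
next
  case False
  define c where "c = ip x y"
  define n where "n = (norm y)\<^sup>2"
  define a where "a = c / complex_of_real n"
  have n: "n > 0" using False by (simp add: n_def)
  have cross: "Re (cnj a * c) = (cmod c)\<^sup>2 / n"
    using cmod_power2[of c] by (simp add: a_def power2_eq_square)
  have sq: "(cmod a)\<^sup>2 * n = (cmod c)\<^sup>2 / n"
    using n by (simp add: a_def norm_divide power_divide power2_eq_square)
  have "0 \<le> (norm (x - a *\<^sub>C y))\<^sup>2" by simp
  also have "\<dots> = (norm x)\<^sup>2 - 2 * Re (cnj a * c) + (cmod a)\<^sup>2 * n"
    by (simp add: norm_diff_sq ip_scaleC_right norm_scaleC power_mult_distrib c_def n_def)
  also have "\<dots> = (norm x)\<^sup>2 - (cmod c)\<^sup>2 / n"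
    unfolding cross sq by simp
  finally have "(cmod c)\<^sup>2 \<le> (norm x * norm y)\<^sup>2"
    using n by (simp add: n_def field_simps power_mult_distrib)
  then show ?thesis unfolding c_def by (rule power2_le_imp_le) simp
qed

lemma Re_ip_le: "Re (ip x y) \<le> norm x * norm y"
  using cauchy_schwarz[of x y] complex_Re_le_cmod order_trans by blast

lemma abs_Re_ip_le: "\<bar>Re (ip x y)\<bar> \<le> norm x * norm y"
  using cauchy_schwarz[of x y] abs_Re_le_cmod order_trans by blast

lemma ip_tendsto_right:
  assumes "(f \<longlongrightarrow> y) F"
  shows "((\<lambda>n. ip x (f n)) \<longlongrightarrow> ip x y) F"
proof -
  have "((\<lambda>n. norm x * norm (f n - y)) \<longlongrightarrow> norm x * 0) F"
    using assms by (intro tendsto_intros tendsto_norm_zero LIM_zero)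
  then have g: "((\<lambda>n. norm x * norm (f n - y)) \<longlongrightarrow> 0) F" by simp
  have "cmod (ip x (f n) - ip x y) \<le> norm x * norm (f n - y)" for n
    using cauchy_schwarz[of x "f n - y"] by (simp add: ip_diff_right)
  then have "((\<lambda>n. ip x (f n) - ip x y) \<longlongrightarrow> 0) F"
    by (intro Lim_null_comparison[OF _ g] always_eventually) auto
  then show ?thesis by (rule LIM_zero_cancel)
qed

lemma ip_tendsto_left:
  assumes "(f \<longlongrightarrow> y) F"
  shows "((\<lambda>n. ip (f n) x) \<longlongrightarrow> ip y x) F"
  using tendsto_cnj[OF ip_tendsto_right[OF assms, of x]] by (simp add: ip_sym[of x])

lemma orthogonal_to_dense_zero:
  assumes "closure V = UNIV" "\<forall>v\<in>V. ip v w = 0"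
  shows "w = 0"
proof -
  obtain f where f: "\<forall>n. f n \<in> V" "f \<longlonglongrightarrow> w"
    using assms(1) closure_sequential by blast
  have "(\<lambda>n. ip (f n) w) \<longlonglongrightarrow> ip w w" by (rule ip_tendsto_left[OF f(2)])
  moreover have "(\<lambda>n. ip (f n) w) = (\<lambda>n. 0)" using f(1) assms(2) by auto
  ultimately have "ip w w = 0" by (simp add: LIMSEQ_const_iff)
  then show ?thesis by (simp add: ip_self)
qed

end

section \<open>The projection theorem and dense ranges\<close>

context hilbert_ip
begin

text \<open>Two points whose midpoint lies in M are close if both almost minimise the distance
  d from x to M; this is the parallelogram law.\<close>
lemma almost_minimisers_close:
  fixes a b x :: 'a
  assumes "(1/2) *\<^sub>R (a + b) \<in> M" and "\<forall>m\<in>M. d \<le> norm (m - x)" and "d \<ge> 0"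
  shows "(norm (a - b))\<^sup>2 \<le> 2 * ((norm (a - x))\<^sup>2 - d\<^sup>2) + 2 * ((norm (b - x))\<^sup>2 - d\<^sup>2)"
proof -
  have "(a - x) + (b - x) = 2 *\<^sub>R ((1/2) *\<^sub>R (a + b) - x)"
    by (simp add: algebra_simps scaleR_2)
  then have "norm ((a - x) + (b - x)) = 2 * norm ((1/2) *\<^sub>R (a + b) - x)" by simp
  then have "4 * d\<^sup>2 \<le> (norm ((a - x) + (b - x)))\<^sup>2"
    using assms by (simp add: power_mult_distrib power_mono)
  then show ?thesis using parallelogram[of "a - x" "b - x"] by simp
qed

lemma best_approximation:
  fixes M :: "'a set"
  assumes ne: "M \<noteq> {}" and mid: "\<forall>a\<in>M. \<forall>b\<in>M. (1/2) *\<^sub>R (a + b) \<in> M"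
  obtains z where "z \<in> closure M" and "\<forall>m\<in>M. norm (z - x) \<le> norm (m - x)"
proof -
  let ?D = "(\<lambda>m. norm (m - x)) ` M"
  define d where "d = Inf ?D"
  have bdd: "bdd_below ?D" by (rule bdd_belowI[of _ 0]) auto
  have dle: "\<forall>m\<in>M. d \<le> norm (m - x)" unfolding d_def using bdd by (simp add: cInf_lower)
  have d0: "d \<ge> 0" unfolding d_def using ne by (intro cInf_greatest) auto
  obtain r where r: "\<forall>n. r n \<in> ?D" "r \<longlonglongrightarrow> d"
    using closure_contains_Inf[of ?D] ne bdd unfolding d_def closure_sequential by auto
  define f where "f n = (SOME m. m \<in> M \<and> r n = norm (m - x))" for n
  have "f n \<in> M \<and> r n = norm (f n - x)" for n
    unfolding f_def by (rule someI_ex) (use r(1) in blast)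
  then have f: "\<And>n. f n \<in> M" and "r = (\<lambda>n. norm (f n - x))" by auto
  with r(2) have fd: "(\<lambda>n. norm (f n - x)) \<longlonglongrightarrow> d" by simp
  define g where "g n = (norm (f n - x))\<^sup>2 - d\<^sup>2" for n
  have g0: "g \<longlonglongrightarrow> 0"
    unfolding g_def using tendsto_diff[OF tendsto_power[OF fd, of 2] tendsto_const[of "d\<^sup>2"]] by simp
  have "Cauchy f"
  proof (rule metric_CauchyI)
    fix e :: real assume e: "e > 0"
    then have "\<forall>\<^sub>F n in sequentially. g n < e\<^sup>2 / 4" by (intro order_tendstoD(2)[OF g0]) simp
    then obtain N where N: "\<And>n. n \<ge> N \<Longrightarrow> g n < e\<^sup>2 / 4" unfolding eventually_sequentially by blast
    show "\<exists>N. \<forall>m\<ge>N. \<forall>n\<ge>N. dist (f m) (f n) < e"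
    proof (intro exI allI impI)
      fix m n assume "m \<ge> N" "n \<ge> N"
      then have "(norm (f m - f n))\<^sup>2 < e\<^sup>2"
        using almost_minimisers_close[OF _ dle d0, of "f m" "f n"] mid f N[of m] N[of n]
        by (simp add: g_def)
      then show "dist (f m) (f n) < e" using e by (simp add: dist_norm power_less_imp_less_base)
    qed
  qed
  then obtain z where z: "f \<longlonglongrightarrow> z" using Cauchy_convergent_iff convergent_def by blast
  have "norm (z - x) = d"
    using tendsto_unique[OF _ tendsto_norm[OF tendsto_diff[OF z tendsto_const]] fd] by simp
  moreover have "z \<in> closure M" using f z closure_sequential by blast
  ultimately show ?thesis using that dle by simp
qed

lemma best_approximation_orthogonal:
  assumes add: "\<forall>a\<in>M. \<forall>b\<in>M. a + b \<in> M" and scale: "\<forall>a\<in>M. \<forall>r. r *\<^sub>R a \<in> M"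
    and z: "z \<in> closure M" and best: "\<forall>m\<in>M. norm (z - x) \<le> norm (m - x)"
    and u: "u \<in> M"
  shows "Re (ip u (z - x)) = 0"
proof -
  obtain f where f: "\<forall>n. f n \<in> M" "f \<longlonglongrightarrow> z" using z closure_sequential by blast
  have "norm (z - x) \<le> norm (z - x + t *\<^sub>R u)" for t
  proof -
    have "(\<lambda>n. norm (f n + t *\<^sub>R u - x)) \<longlonglongrightarrow> norm (z + t *\<^sub>R u - x)"
      by (intro tendsto_intros f(2))
    moreover have "norm (z - x) \<le> norm (f n + t *\<^sub>R u - x)" for n
      using best add scale f(1) u by blast
    ultimately show ?thesis by (simp add: LIMSEQ_le_const algebra_simps)
  qed
  then have sq: "(norm (z - x))\<^sup>2 \<le> (norm (z - x + t *\<^sub>R u))\<^sup>2" for t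
    by (simp add: power_mono)
  have "0 \<le> 2 * t * Re (ip (z - x) u) + t\<^sup>2 * (norm u)\<^sup>2" for t
    using norm_add_sq[of "z - x" "t *\<^sub>R u"] sq[of t]
    by (simp add: ip_scaleR_right power_mult_distrib)
  then have "Re (ip (z - x) u) = 0" by (intro quadratic_nonneg_linear_zero[of "(norm u)\<^sup>2"]) auto
  then show ?thesis by (simp add: Re_ip_sym)
qed

lemma range_dense_if_orthogonal_trivial:
  assumes f: "linear_on V f" and orth: "\<And>w. \<forall>v\<in>V. ip (f v) w = 0 \<Longrightarrow> w = 0"
  shows "x \<in> closure (f ` V)"
proof -
  interpret f: linear_on V f by (rule f)
  let ?M = "f ` V"
  have add: "\<forall>a\<in>?M. \<forall>b\<in>?M. a + b \<in> ?M"
    by (auto simp: image_iff) (metis f.add_mem f.map_add)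
  have scale: "\<forall>a\<in>?M. \<forall>r. r *\<^sub>R a \<in> ?M"
    by (auto simp: image_iff) (metis f.scaleR_mem f.map_scaleR)
  have "?M \<noteq> {}" using f.zero_mem by blast
  moreover have "\<forall>a\<in>?M. \<forall>b\<in>?M. (1/2) *\<^sub>R (a + b) \<in> ?M" using add scale by blast
  ultimately obtain z where z: "z \<in> closure ?M" and best: "\<forall>m\<in>?M. norm (z - x) \<le> norm (m - x)"
    by (rule best_approximation)
  have "ip (f v) (z - x) = 0" if v: "v \<in> V" for v
  proof -
    have "Re (ip (f v) (z - x)) = 0"
      using best_approximation_orthogonal[OF add scale z best] v by blast
    moreover have "Re (ip (f (\<i> *\<^sub>C v)) (z - x)) = 0"
      using best_approximation_orthogonal[OF add scale z best] f.scaleC_mem[OF v] by blast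
    then have "Im (ip (f v) (z - x)) = 0" using v by (simp add: f.map_scaleC ip_scaleC_left)
    ultimately show ?thesis by (simp add: complex_eq_iff)
  qed
  then have "z = x" using orth[of "z - x"] by simp
  then show ?thesis using z by simp
qed

end

section \<open>The square root of T and the energy space\<close>

locale positive_root = hilbert_ip ip for ip :: "'a::{complex_normed_vector,banach} \<Rightarrow> 'a \<Rightarrow> complex" +
  fixes VR VT :: "'a set" and R T :: "'a \<Rightarrow> 'a" and a0 :: real
  assumes R_sa: "self_adjoint_op ip VR R"
    and VT_eq: "VT = {x \<in> VR. R x \<in> VR}" and T_eq: "\<forall>x\<in>VT. T x = R (R x)"
    and T_sa: "self_adjoint_op ip VT T"
    and T_ge: "\<forall>x\<in>VT. a0 * (norm x)\<^sup>2 \<le> Re (ip (T x) x)"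
    and a0_pos: "a0 > 0"
begin

sublocale R: linear_on VR R
  using R_sa unfolding self_adjoint_op_def linear_on_def by blast

sublocale T: linear_on VT T
  using T_sa unfolding self_adjoint_op_def linear_on_def by blast

lemma R_sym: "x \<in> VR \<Longrightarrow> y \<in> VR \<Longrightarrow> ip (R x) y = ip x (R y)"
  using R_sa unfolding self_adjoint_op_def by blast

lemma R_adj: "\<forall>x\<in>VR. ip (R x) y = ip x z \<Longrightarrow> y \<in> VR"
  using R_sa unfolding self_adjoint_op_def by blast

lemma VR_dense: "closure VR = UNIV"
  using R_sa unfolding self_adjoint_op_def densely_defined_def by blast

text \<open>A vector orthogonal to the range of T lies in Dom(T) (self-adjointness) and is then
  annihilated by T >= a_0; hence the range of T is dense.\<close>
lemma range_T_dense: "x \<in> closure (T ` VT)"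
proof (rule range_dense_if_orthogonal_trivial)
  show "linear_on VT T" by (rule T.linear_on_axioms)
  fix w assume orth: "\<forall>v\<in>VT. ip (T v) w = 0"
  then have "w \<in> VT" using T_sa unfolding self_adjoint_op_def by (metis ip_zero_right)
  then have "a0 * (norm w)\<^sup>2 \<le> 0" using T_ge orth by fastforce
  then show "w = 0" using a0_pos by (simp add: mult_le_0_iff)
qed

text \<open>From T >= a_0: |T y| >= a_0 |y| and |R y|^2 = (T y, y), hence sqrt a_0 |R y| <= |T y|.\<close>
lemma T_lower: assumes "y \<in> VT" shows "a0 * norm y \<le> norm (T y)"
proof (cases "y = 0")
  case False
  have "a0 * norm y * norm y \<le> Re (ip (T y) y)" using T_ge assms by (simp add: power2_eq_square mult.assoc)
  also have "\<dots> \<le> norm (T y) * norm y" by (rule Re_ip_le)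
  finally show ?thesis using False by simp
qed simp

lemma norm_R_sq: assumes "y \<in> VT" shows "(norm (R y))\<^sup>2 = Re (ip (T y) y)"
proof -
  have "y \<in> VR" "R y \<in> VR" using assms VT_eq by auto
  then have "ip (R y) (R y) = ip y (T y)" using R_sym T_eq assms by simp
  then show ?thesis by (metis Re_ip_self Re_ip_sym)
qed

lemma R_le_T: assumes "y \<in> VT" shows "sqrt a0 * norm (R y) \<le> norm (T y)"
proof -
  have "a0 * (norm (R y))\<^sup>2 \<le> a0 * (norm (T y) * norm y)"
    using norm_R_sq[OF assms] Re_ip_le[of "T y" y] a0_pos by simp
  also have "\<dots> \<le> (norm (T y))\<^sup>2"
    using mult_left_mono[OF T_lower[OF assms] norm_ge_zero[of "T y"]] by (simp add: power2_eq_square mult_ac)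
  finally have "(sqrt a0 * norm (R y))\<^sup>2 \<le> (norm (T y))\<^sup>2"
    using a0_pos by (simp add: power_mult_distrib)
  then show ?thesis by (rule power2_le_imp_le) simp
qed

text \<open>The coercivity of R: approximate x by T y_n and use (x, T y_n) = (R x, R y_n).\<close>
lemma R_coercive: assumes x: "x \<in> VR" shows "sqrt a0 * norm x \<le> norm (R x)"
proof -
  obtain f where f: "\<forall>n. f n \<in> T ` VT" "f \<longlonglongrightarrow> x"
    using range_T_dense[of x] unfolding closure_sequential by blast
  have bound: "sqrt a0 * cmod (ip x (f n)) \<le> norm (R x) * norm (f n)" for n
  proof -
    obtain y where y: "y \<in> VT" "f n = T y" using f(1) by blast
    then have "ip x (f n) = ip (R x) (R y)" using R_sym[OF x, of "R y"] T_eq VT_eq by simp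
    then have "sqrt a0 * cmod (ip x (f n)) \<le> norm (R x) * (sqrt a0 * norm (R y))"
      using mult_left_mono[OF cauchy_schwarz[of "R x" "R y"], of "sqrt a0"] a0_pos by (simp add: mult_ac)
    also have "\<dots> \<le> norm (R x) * norm (f n)" using R_le_T[OF y(1)] y(2) by (simp add: mult_left_mono)
    finally show ?thesis .
  qed
  have "(\<lambda>n. sqrt a0 * cmod (ip x (f n))) \<longlonglongrightarrow> sqrt a0 * cmod (ip x x)"
    by (intro tendsto_intros ip_tendsto_right f(2))
  moreover have "(\<lambda>n. norm (R x) * norm (f n)) \<longlonglongrightarrow> norm (R x) * norm x"
    by (intro tendsto_intros f(2))
  ultimately have "sqrt a0 * cmod (ip x x) \<le> norm (R x) * norm x"
    using bound by (intro LIMSEQ_le) auto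
  then have "(sqrt a0 * norm x) * norm x \<le> norm (R x) * norm x"
    by (simp add: ip_self power2_eq_square norm_mult mult.assoc)
  then show ?thesis by (cases "x = 0") simp_all
qed

lemma R_coercive_sq: "x \<in> VR \<Longrightarrow> a0 * (norm x)\<^sup>2 \<le> (norm (R x))\<^sup>2"
  using power_mono[OF R_coercive, of x 2] a0_pos by (simp add: power_mult_distrib)

lemma R_inj: "x \<in> VR \<Longrightarrow> R x = 0 \<Longrightarrow> x = 0"
  using R_coercive[of x] a0_pos by (simp add: mult_le_0_iff)

lemma R_closed:
  assumes c: "\<forall>n. c n \<in> VR" "c \<longlonglongrightarrow> c0" and b: "(\<lambda>n. R (c n)) \<longlonglongrightarrow> b"
  shows "c0 \<in> VR \<and> R c0 = b"
proof -
  have eq: "ip (R v) c0 = ip v b" if v: "v \<in> VR" for v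
  proof -
    have "(\<lambda>n. ip (R v) (c n)) \<longlonglongrightarrow> ip (R v) c0" by (rule ip_tendsto_right[OF c(2)])
    moreover have "(\<lambda>n. ip (R v) (c n)) = (\<lambda>n. ip v (R (c n)))" using R_sym v c(1) by blast
    ultimately show ?thesis using ip_tendsto_right[OF b] LIMSEQ_unique by metis
  qed
  then have c0: "c0 \<in> VR" by (intro R_adj[where z=b]) blast
  have "\<forall>v\<in>VR. ip v (R c0 - b) = 0" using eq R_sym[OF _ c0] by (simp add: ip_diff_right)
  then have "R c0 - b = 0" by (intro orthogonal_to_dense_zero[OF VR_dense]) blast
  then show ?thesis using c0 by simp
qed

definition energy_embed :: "'a \<times> 'a \<Rightarrow> 'a \<times> 'a" where "energy_embed z = (fst z, R (snd z))"

definition energy_dist :: "'a \<times> 'a \<Rightarrow> 'a \<times> 'a \<Rightarrow> real" where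
  "energy_dist z w = dist (energy_embed z) (energy_embed w)"

abbreviation (input) "H \<equiv> Hsp VR"
abbreviation (input) "hn \<equiv> hnorm R"

lemma hnorm_embed: "hn z = norm (energy_embed z)"
  by (simp add: hnorm_def energy_embed_def norm_Pair)

lemma Hsp_iff: "z \<in> H \<longleftrightarrow> snd z \<in> VR"
  by (cases z) (simp add: Hsp_def)

lemma Hsp_add: "z \<in> H \<Longrightarrow> w \<in> H \<Longrightarrow> z + w \<in> H"
  and Hsp_diff: "z \<in> H \<Longrightarrow> w \<in> H \<Longrightarrow> z - w \<in> H"
  and Hsp_scaleR: "z \<in> H \<Longrightarrow> r *\<^sub>R z \<in> H"
  and Hsp_zero: "0 \<in> H"
  by (simp_all add: Hsp_iff R.add_mem R.diff_mem R.scaleR_mem R.zero_mem)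

lemma embed_add: "z \<in> H \<Longrightarrow> w \<in> H \<Longrightarrow> energy_embed (z + w) = energy_embed z + energy_embed w"
  and embed_diff: "z \<in> H \<Longrightarrow> w \<in> H \<Longrightarrow> energy_embed (z - w) = energy_embed z - energy_embed w"
  and embed_scaleR: "z \<in> H \<Longrightarrow> energy_embed (r *\<^sub>R z) = r *\<^sub>R energy_embed z"
  by (simp_all add: energy_embed_def Hsp_iff R.map_add R.map_diff R.map_scaleR)

lemma hnorm_triangle: "z \<in> H \<Longrightarrow> w \<in> H \<Longrightarrow> hn (z + w) \<le> hn z + hn w"
  by (simp add: hnorm_embed embed_add norm_triangle_ineq)

lemma hnorm_diff_le: "z \<in> H \<Longrightarrow> w \<in> H \<Longrightarrow> hn (z - w) \<le> hn z + hn w"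
  by (simp add: hnorm_embed embed_diff norm_triangle_ineq4)

lemma hnorm_scaleR: "z \<in> H \<Longrightarrow> hn (r *\<^sub>R z) = \<bar>r\<bar> * hn z"
  by (simp add: hnorm_embed embed_scaleR)

lemma hnorm_nonneg [simp]: "hn z \<ge> 0"
  by (simp add: hnorm_embed)

lemma hnorm_fst: "norm (fst z) \<le> hn z"
  and hnorm_snd: "norm (R (snd z)) \<le> hn z"
  by (simp_all add: hnorm_def real_le_rsqrt)

lemma hnorm_sq: "(hn z)\<^sup>2 = (norm (fst z))\<^sup>2 + (norm (R (snd z)))\<^sup>2"
  by (simp add: hnorm_def)

lemma hnorm_zero [simp]: "hn 0 = 0"
  by (simp add: hnorm_def R.map_zero zero_prod_def)

lemma hnorm_eq_0_iff: "z \<in> H \<Longrightarrow> hn z = 0 \<longleftrightarrow> z = 0"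
  by (cases z) (auto simp: hnorm_def Hsp_iff R_inj R.map_zero zero_prod_def)

lemma embed_inj: "z \<in> H \<Longrightarrow> w \<in> H \<Longrightarrow> energy_embed z = energy_embed w \<Longrightarrow> z = w"
  using hnorm_eq_0_iff[of "z - w"] Hsp_diff by (simp add: hnorm_embed embed_diff)

lemma energy_dist_eq: "z \<in> H \<Longrightarrow> w \<in> H \<Longrightarrow> energy_dist z w = hn (z - w)"
  by (simp add: energy_dist_def hnorm_embed embed_diff dist_norm)

lemma hnorm_tendsto_iff:
  assumes "\<forall>\<^sub>F x in F. f x \<in> H" and "l \<in> H"
  shows "((\<lambda>x. hn (f x - l)) \<longlongrightarrow> 0) F \<longleftrightarrow> ((\<lambda>x. energy_embed (f x)) \<longlongrightarrow> energy_embed l) F"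
proof -
  have "\<forall>\<^sub>F x in F. hn (f x - l) = norm (energy_embed (f x) - energy_embed l)"
    using assms by (auto elim: eventually_mono simp: hnorm_embed embed_diff)
  then have "((\<lambda>x. hn (f x - l)) \<longlongrightarrow> 0) F \<longleftrightarrow> ((\<lambda>x. norm (energy_embed (f x) - energy_embed l)) \<longlongrightarrow> 0) F"
    by (rule tendsto_cong)
  then show ?thesis by (simp add: tendsto_norm_zero_iff LIM_zero_iff)
qed

lemma hnorm_tendsto:
  assumes "\<forall>\<^sub>F x in F. f x \<in> H" and "l \<in> H" and "((\<lambda>x. hn (f x - l)) \<longlongrightarrow> 0) F"
  shows "((\<lambda>x. hn (f x)) \<longlongrightarrow> hn l) F"
proof -
  have "((\<lambda>x. energy_embed (f x)) \<longlongrightarrow> energy_embed l) F" using assms hnorm_tendsto_iff by blast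
  then show ?thesis unfolding hnorm_embed by (rule tendsto_norm)
qed

lemma hnorm_limit_unique:
  assumes "F \<noteq> bot" and "\<forall>\<^sub>F x in F. f x \<in> H" and "a \<in> H" "b \<in> H"
    and "((\<lambda>x. hn (f x - a)) \<longlongrightarrow> 0) F" and "((\<lambda>x. hn (f x - b)) \<longlongrightarrow> 0) F"
  shows "a = b"
  using assms tendsto_unique[of F "\<lambda>x. energy_embed (f x)"] hnorm_tendsto_iff embed_inj by metis

sublocale energy: Metric_space H energy_dist
proof
  fix x y z
  show "0 \<le> energy_dist x y" by (simp add: energy_dist_def)
  show "energy_dist x y = energy_dist y x" by (simp add: energy_dist_def dist_commute)
  show "x \<in> H \<Longrightarrow> y \<in> H \<Longrightarrow> (energy_dist x y = 0) = (x = y)"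
    unfolding energy_dist_def dist_eq_0_iff by (metis embed_inj)
  show "energy_dist x z \<le> energy_dist x y + energy_dist y z"
    by (simp add: energy_dist_def dist_triangle)
qed

lemma energy_limitin_iff:
  "limitin energy.mtopology \<sigma> l sequentially \<longleftrightarrow>
     l \<in> H \<and> (\<forall>\<^sub>F n in sequentially. \<sigma> n \<in> H) \<and> (\<lambda>n. energy_embed (\<sigma> n)) \<longlonglongrightarrow> energy_embed l"
proof -
  have "(\<forall>e>0. \<forall>\<^sub>F n in sequentially. \<sigma> n \<in> H \<and> energy_dist (\<sigma> n) l < e) \<longleftrightarrow>
        (\<forall>\<^sub>F n in sequentially. \<sigma> n \<in> H) \<and> (\<lambda>n. energy_embed (\<sigma> n)) \<longlonglongrightarrow> energy_embed l"
    unfolding tendsto_iff energy_dist_def eventually_conj_iff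
    by (metis (no_types, lifting) zero_less_one)
  then show ?thesis unfolding energy.limitin_metric by blast
qed

text \<open>The second components are controlled by the energy distance, because R is coercive.\<close>
lemma snd_dist_le: "z \<in> H \<Longrightarrow> w \<in> H \<Longrightarrow> sqrt a0 * dist (snd z) (snd w) \<le> energy_dist z w"
  using R_coercive[of "snd z - snd w"] hnorm_snd[of "z - w"]
  by (simp add: energy_dist_eq dist_norm Hsp_iff R.diff_mem)

text \<open>The energy space is complete: the first components converge in H, the second ones
  converge in H because R is coercive, and R is closed.\<close>
lemma energy_complete: "energy.mcomplete"
  unfolding energy.mcomplete_def
proof (intro allI impI)
  fix \<sigma> assume "energy.MCauchy \<sigma>"
  then have \<sigma>: "\<And>n. \<sigma> n \<in> H"
    and cau: "\<And>e. e > 0 \<Longrightarrow> \<exists>N. \<forall>n n'. N \<le> n \<longrightarrow> N \<le> n' \<longrightarrow> energy_dist (\<sigma> n) (\<sigma> n') < e"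
    unfolding energy.MCauchy_def by auto
  have "Cauchy (\<lambda>n. energy_embed (\<sigma> n))" using cau unfolding Cauchy_def energy_dist_def by blast
  then obtain p where p: "(\<lambda>n. energy_embed (\<sigma> n)) \<longlonglongrightarrow> p" using Cauchy_convergent_iff convergent_def by blast
  have "Cauchy (\<lambda>n. snd (\<sigma> n))"
  proof (rule metric_CauchyI)
    fix e :: real assume "e > 0"
    then obtain N where N: "\<forall>n n'. N \<le> n \<longrightarrow> N \<le> n' \<longrightarrow> energy_dist (\<sigma> n) (\<sigma> n') < sqrt a0 * e"
      using cau[of "sqrt a0 * e"] a0_pos by auto
    have "dist (snd (\<sigma> m)) (snd (\<sigma> n)) < e" if "N \<le> m" "N \<le> n" for m n
    proof -
      have "sqrt a0 * dist (snd (\<sigma> m)) (snd (\<sigma> n)) < sqrt a0 * e"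
        using snd_dist_le[OF \<sigma> \<sigma>, of m n] N that by (meson le_less_trans)
      then show ?thesis using real_sqrt_gt_zero[OF a0_pos] by (simp add: mult_less_cancel_left_pos)
    qed
    then show "\<exists>N. \<forall>m\<ge>N. \<forall>n\<ge>N. dist (snd (\<sigma> m)) (snd (\<sigma> n)) < e" by blast
  qed
  then obtain c where c: "(\<lambda>n. snd (\<sigma> n)) \<longlonglongrightarrow> c" using Cauchy_convergent_iff convergent_def by blast
  have "(\<lambda>n. R (snd (\<sigma> n))) \<longlonglongrightarrow> snd p" using tendsto_snd[OF p] by (simp add: energy_embed_def)
  then have cR: "c \<in> VR \<and> R c = snd p" using R_closed[OF _ c] \<sigma> Hsp_iff by blast
  have "(\<lambda>n. energy_embed (\<sigma> n)) \<longlonglongrightarrow> energy_embed (fst p, c)" using p cR by (simp add: energy_embed_def)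
  then show "\<exists>l. limitin energy.mtopology \<sigma> l sequentially"
    using cR \<sigma> by (intro exI[of _ "(fst p, c)"]) (simp add: energy_limitin_iff Hsp_iff)
qed

section \<open>The uniform boundedness principle on the energy space\<close>

definition bounded_energy_op :: "('a \<times> 'a \<Rightarrow> 'a \<times> 'a) \<Rightarrow> bool" where
  "bounded_energy_op L \<longleftrightarrow> (\<forall>z\<in>H. L z \<in> H) \<and> (\<forall>z\<in>H. \<forall>w\<in>H. L (z + w) = L z + L w) \<and>
     (\<forall>r. \<forall>z\<in>H. L (r *\<^sub>R z) = r *\<^sub>R L z) \<and> (\<exists>K. \<forall>z\<in>H. hn (L z) \<le> K * hn z)"

lemma bounded_energy_opD:
  assumes "bounded_energy_op L"
  shows "z \<in> H \<Longrightarrow> L z \<in> H"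
    and "z \<in> H \<Longrightarrow> w \<in> H \<Longrightarrow> L (z + w) = L z + L w"
    and "z \<in> H \<Longrightarrow> L (r *\<^sub>R z) = r *\<^sub>R L z"
    and "z \<in> H \<Longrightarrow> w \<in> H \<Longrightarrow> L (z - w) = L z - L w"
    and "L 0 = 0"
  using assms unfolding bounded_energy_op_def
  by (simp_all, metis Hsp_scaleR scaleR_minus1_left diff_conv_add_uminus, metis Hsp_zero scaleR_zero_left)

lemma bounded_energy_op_bound:
  assumes "bounded_energy_op L"
  obtains K where "K \<ge> 0" "\<And>z. z \<in> H \<Longrightarrow> hn (L z) \<le> K * hn z"
proof -
  obtain K where "\<forall>z\<in>H. hn (L z) \<le> K * hn z" using assms unfolding bounded_energy_op_def by blast
  then have "\<forall>z\<in>H. hn (L z) \<le> max K 0 * hn z"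
    by (meson max.cobounded1 mult_right_mono hnorm_nonneg order_trans)
  then show ?thesis using that[of "max K 0"] by simp
qed

text \<open>Bounded operators are continuous, so their level sets are closed.\<close>
lemma level_set_closed:
  assumes L: "\<And>i. bounded_energy_op (L i)"
  shows "closedin energy.mtopology {z \<in> H. \<forall>i. hn (L i z) \<le> c}"
  unfolding energy.metric_closedin_iff_sequentially_closed
proof (intro conjI allI impI)
  fix \<sigma> l assume a: "range \<sigma> \<subseteq> {z \<in> H. \<forall>i. hn (L i z) \<le> c} \<and> limitin energy.mtopology \<sigma> l sequentially"
  then have \<sigma>: "\<And>n. \<sigma> n \<in> H" "\<And>n i. hn (L i (\<sigma> n)) \<le> c" and l: "l \<in> H"
    and lim: "(\<lambda>n. hn (\<sigma> n - l)) \<longlonglongrightarrow> 0"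
    by (auto simp: energy_limitin_iff hnorm_tendsto_iff)
  have "hn (L i l) \<le> c" for i
  proof -
    obtain K where K: "K \<ge> 0" "\<And>z. z \<in> H \<Longrightarrow> hn (L i z) \<le> K * hn z"
      using bounded_energy_op_bound[OF L] by blast
    have "norm (hn (L i (\<sigma> n) - L i l)) \<le> K * hn (\<sigma> n - l)" for n
      using K(2)[OF Hsp_diff[OF \<sigma>(1) l]] bounded_energy_opD(4)[OF L \<sigma>(1) l] by simp
    then have "(\<lambda>n. hn (L i (\<sigma> n) - L i l)) \<longlonglongrightarrow> 0"
      by (intro Lim_null_comparison[OF always_eventually tendsto_mult_right_zero[OF lim]]) auto
    then have "(\<lambda>n. hn (L i (\<sigma> n))) \<longlonglongrightarrow> hn (L i l)"
      using \<sigma>(1) l by (intro hnorm_tendsto) (simp_all add: bounded_energy_opD[OF L])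
    then show ?thesis using \<sigma>(2) by (intro LIMSEQ_le_const2) auto
  qed
  then show "l \<in> {z \<in> H. \<forall>i. hn (L i z) \<le> c}" using l by blast
qed auto

lemma closed_cover_contains_ball:
  assumes closed: "\<And>N::nat. closedin energy.mtopology (F N)" and cover: "(\<Union>N. F N) = H"
  shows "\<exists>N z0 r. r > 0 \<and> z0 \<in> H \<and> energy.mball z0 r \<subseteq> F N"
proof -
  have "\<exists>N. energy.mtopology interior_of F N \<noteq> {}"
  proof (rule ccontr)
    assume "\<not> ?thesis"
    then have "energy.mtopology interior_of \<Union> (range F) = {}"
      by (intro energy.metric_Baire_category_alt energy_complete) (auto simp: closed)
    then show False using cover Hsp_zero interior_of_topspace[of energy.mtopology] by simp
  qed
  then obtain N z0 where z0: "z0 \<in> energy.mtopology interior_of F N" by blast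
  then obtain r where r: "r > 0" "energy.mball z0 r \<subseteq> energy.mtopology interior_of F N"
    using openin_interior_of[of energy.mtopology "F N"] unfolding energy.openin_mtopology by blast
  have "z0 \<in> H" using z0 interior_of_subset_topspace by fastforce
  moreover have "energy.mball z0 r \<subseteq> F N"
    using r(2) interior_of_subset[of energy.mtopology "F N"] by (rule order_trans)
  ultimately show ?thesis using r(1) by blast
qed

text \<open>A bounded operator that is bounded by c on a ball of radius r is bounded by 4c/r:
  scale z into the ball around 0 and write it as a difference of two points of the ball
  around z0.\<close>
lemma bound_from_ball:
  assumes L: "bounded_energy_op L" and r: "r > 0" and z0: "z0 \<in> H"
    and ball: "\<And>w. w \<in> energy.mball z0 r \<Longrightarrow> hn (L w) \<le> c" and z: "z \<in> H"
  shows "hn (L z) \<le> 4 * c / r * hn z"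
proof -
  have small: "hn (L y) \<le> 2 * c" if y: "y \<in> H" "hn y < r" for y
  proof -
    have "energy_dist z0 (z0 + y) = hn y"
      using energy.commute energy_dist_eq[OF Hsp_add[OF z0 y(1)] z0] by simp
    then have "hn (L (z0 + y)) \<le> c" "hn (L z0) \<le> c"
      using ball y z0 r by (auto simp: Hsp_add)
    moreover have "L y = L (z0 + y) - L z0" using y z0 by (simp add: bounded_energy_opD[OF L])
    then have "hn (L y) \<le> hn (L (z0 + y)) + hn (L z0)"
      using hnorm_diff_le[OF bounded_energy_opD(1)[OF L Hsp_add[OF z0 y(1)]] bounded_energy_opD(1)[OF L z0]]
      by simp
    ultimately show ?thesis by linarith
  qed
  show ?thesis
  proof (cases "z = 0")
    case True
    then show ?thesis by (simp add: bounded_energy_opD[OF L])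
  next
    case False
    then have hz: "hn z > 0" using hnorm_eq_0_iff[OF z] hnorm_nonneg[of z] by linarith
    define s where "s = r / (2 * hn z)"
    have s: "s > 0" using r hz by (simp add: s_def)
    have "hn (s *\<^sub>R z) < r" using z hz r by (simp add: hnorm_scaleR s_def)
    then have "hn (L (s *\<^sub>R z)) \<le> 2 * c" by (rule small[OF Hsp_scaleR[OF z]])
    then have "s * hn (L z) \<le> 2 * c" using z s by (simp add: bounded_energy_opD[OF L] hnorm_scaleR)
    then show ?thesis using s r hz by (simp add: s_def field_simps)
  qed
qed

text \<open>Banach--Steinhaus: a pointwise bounded family of bounded operators is uniformly bounded.
  The level sets of the family cover the space, so by Baire one of them contains a ball.\<close>
lemma uniform_boundedness:
  fixes L :: "'i \<Rightarrow> 'a \<times> 'a \<Rightarrow> 'a \<times> 'a"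
  assumes L: "\<And>i. bounded_energy_op (L i)"
    and pointwise: "\<And>z. z \<in> H \<Longrightarrow> \<exists>B. \<forall>i. hn (L i z) \<le> B"
  shows "\<exists>K. \<forall>i. \<forall>z\<in>H. hn (L i z) \<le> K * hn z"
proof -
  define F where "F N = {z \<in> H. \<forall>i. hn (L i z) \<le> real N}" for N :: nat
  have closed: "closedin energy.mtopology (F N)" for N
    unfolding F_def by (rule level_set_closed[OF L])
  have cover: "(\<Union>N. F N) = H"
  proof
    show "H \<subseteq> (\<Union>N. F N)"
    proof
      fix z assume z: "z \<in> H"
      obtain B where "\<forall>i. hn (L i z) \<le> B" using pointwise[OF z] by blast
      then have "z \<in> F (nat \<lceil>B\<rceil>)" using z by (auto simp: F_def intro: order_trans[OF _ real_nat_ceiling_ge])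
      then show "z \<in> (\<Union>N. F N)" by blast
    qed
  qed (auto simp: F_def)
  obtain N z0 r where r: "r > 0" and z0: "z0 \<in> H" and ball: "energy.mball z0 r \<subseteq> F N"
    using closed_cover_contains_ball[OF closed cover] by auto
  have "hn (L i z) \<le> 4 * real N / r * hn z" if "z \<in> H" for i z
    using ball unfolding F_def by (intro bound_from_ball[OF L r z0 _ that]) blast
  then show ?thesis by blast
qed

end

section \<open>C_0-semigroups on the energy space\<close>

lemma pscaleC_of_real: "pscaleC (complex_of_real r) z = r *\<^sub>R z"
  by (cases z) (simp add: pscaleC_def scaleR_scaleC)

locale energy_semigroup = positive_root +
  fixes Tsg :: "real \<Rightarrow> 'a \<times> 'a \<Rightarrow> 'a \<times> 'a"
    and Dom :: "('a \<times> 'a) set" and G :: "'a \<times> 'a \<Rightarrow> 'a \<times> 'a"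
  assumes generated: "generated_by VR R Tsg Dom G"
begin

lemma C0: "C0_semigroup VR R Tsg"
  using generated unfolding generated_by_def by blast

lemma T_in: "t \<ge> 0 \<Longrightarrow> z \<in> H \<Longrightarrow> Tsg t z \<in> H"
  and T_add: "t \<ge> 0 \<Longrightarrow> z \<in> H \<Longrightarrow> w \<in> H \<Longrightarrow> Tsg t (z + w) = Tsg t z + Tsg t w"
  and T_pscaleC: "t \<ge> 0 \<Longrightarrow> z \<in> H \<Longrightarrow> Tsg t (pscaleC c z) = pscaleC c (Tsg t z)"
  and T_bound: "t \<ge> 0 \<Longrightarrow> \<exists>K. \<forall>z\<in>H. hn (Tsg t z) \<le> K * hn z"
  and T_0: "z \<in> H \<Longrightarrow> Tsg 0 z = z"
  and T_semi: "s \<ge> 0 \<Longrightarrow> t \<ge> 0 \<Longrightarrow> z \<in> H \<Longrightarrow> Tsg (s + t) z = Tsg s (Tsg t z)"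
  and T_cont0: "z \<in> H \<Longrightarrow> ((\<lambda>t. hn (Tsg t z - z)) \<longlongrightarrow> 0) (at_right 0)"
  using C0 unfolding C0_semigroup_def by blast+

lemma T_scaleR: "t \<ge> 0 \<Longrightarrow> z \<in> H \<Longrightarrow> Tsg t (r *\<^sub>R z) = r *\<^sub>R Tsg t z"
  using T_pscaleC[of t z "complex_of_real r"] by (simp add: pscaleC_of_real)

lemma T_bounded_op: "t \<ge> 0 \<Longrightarrow> bounded_energy_op (Tsg t)"
  unfolding bounded_energy_op_def by (simp add: T_in T_add T_scaleR T_bound)

lemma T_diff: "t \<ge> 0 \<Longrightarrow> z \<in> H \<Longrightarrow> w \<in> H \<Longrightarrow> Tsg t (z - w) = Tsg t z - Tsg t w"
  using bounded_energy_opD(4)[OF T_bounded_op] by blast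

lemma Dom_H: "z \<in> Dom \<Longrightarrow> z \<in> H"
  and G_H: "z \<in> Dom \<Longrightarrow> G z \<in> H"
  and Dom_eq: "Dom = {z \<in> H. \<exists>y\<in>H. ((\<lambda>t. hn ((1 / t) *\<^sub>R (Tsg t z - z) - y)) \<longlongrightarrow> 0) (at_right 0)}"
  and G_lim: "z \<in> Dom \<Longrightarrow> ((\<lambda>t. hn ((1 / t) *\<^sub>R (Tsg t z - z) - G z)) \<longlongrightarrow> 0) (at_right 0)"
  using generated unfolding generated_by_def by blast+

lemma orbit_bounded_along_null_sequence:
  assumes s: "\<And>n. 0 < s n" "s \<longlonglongrightarrow> 0" and z: "z \<in> H"
  shows "\<exists>B. \<forall>n. hn (Tsg (s n) z) \<le> B"
proof -
  have "\<forall>n. s n \<in> {0<..} \<and> s n \<noteq> 0" using s(1) by (metis greaterThan_iff less_irrefl)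
  then have "filterlim s (at_right 0) sequentially"
    using s(2) unfolding filterlim_at by (simp add: always_eventually)
  then have "(\<lambda>n. hn (Tsg (s n) z - z)) \<longlonglongrightarrow> 0" by (rule filterlim_compose[OF T_cont0[OF z]])
  then have "Bseq (\<lambda>n. hn (Tsg (s n) z - z))" by (rule convergent_imp_Bseq[OF convergentI])
  then obtain B where "\<forall>n. norm (hn (Tsg (s n) z - z)) \<le> B" unfolding Bseq_def by blast
  then have B: "\<And>n. hn (Tsg (s n) z - z) \<le> B" by simp
  have "hn (Tsg (s n) z) \<le> B + hn z" for n
  proof -
    have "s n \<ge> 0" using s(1)[of n] by simp
    then have "hn (Tsg (s n) z) \<le> hn (Tsg (s n) z - z) + hn z"
      using hnorm_triangle[OF Hsp_diff[OF T_in[OF _ z] z] z] by simp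
    then show ?thesis using B[of n] by linarith
  qed
  then show ?thesis by blast
qed

text \<open>The operators T(s) are uniformly bounded near s = 0: otherwise a null sequence s_n
  with |T(s_n)| > n would contradict the uniform boundedness principle.\<close>
lemma bounded_near_zero: "\<exists>\<delta>>0. \<exists>M. \<forall>s\<in>{0..\<delta>}. \<forall>z\<in>H. hn (Tsg s z) \<le> M * hn z"
proof (rule ccontr)
  assume no: "\<not> ?thesis"
  have "\<exists>s z. s \<in> {0<..inverse (real (Suc n))} \<and> z \<in> H \<and> real (Suc n) * hn z < hn (Tsg s z)" for n
  proof -
    have "inverse (real (Suc n)) > 0" by simp
    then have "\<not> (\<forall>s\<in>{0..inverse (real (Suc n))}. \<forall>z\<in>H. hn (Tsg s z) \<le> real (Suc n) * hn z)"
      using no by blast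
    then obtain s z where sz: "s \<in> {0..inverse (real (Suc n))}" "z \<in> H" "real (Suc n) * hn z < hn (Tsg s z)"
      by (auto simp: not_le)
    moreover have "s \<noteq> 0"
    proof
      assume "s = 0"
      then have "hn (Tsg s z) = hn z" using T_0 sz(2) by simp
      moreover have "hn z \<le> real (Suc n) * hn z" using mult_right_mono[of 1 "real (Suc n)" "hn z"] by simp
      ultimately show False using sz(3) by linarith
    qed
    ultimately show ?thesis by (intro exI[of _ s] exI[of _ z]) simp
  qed
  then obtain s zz where s: "\<And>n. s n \<in> {0<..inverse (real (Suc n))}"
    and zz: "\<And>n. zz n \<in> H" "\<And>n. real (Suc n) * hn (zz n) < hn (Tsg (s n) (zz n))"
    by metis
  have s0: "\<And>n. 0 < s n" using s by simp
  have "s \<longlonglongrightarrow> 0"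
    using s by (intro tendsto_sandwich[OF _ _ tendsto_const LIMSEQ_inverse_real_of_nat])
      (auto intro!: always_eventually less_imp_le)
  then have "\<exists>K. \<forall>n. \<forall>z\<in>H. hn (Tsg (s n) z) \<le> K * hn z"
    using s0 by (intro uniform_boundedness T_bounded_op orbit_bounded_along_null_sequence less_imp_le)
  then obtain K where K: "\<forall>n. \<forall>z\<in>H. hn (Tsg (s n) z) \<le> K * hn z" by blast
  define n where "n = nat \<lceil>K\<rceil>"
  have "K * hn (zz n) \<le> real (Suc n) * hn (zz n)"
    unfolding n_def by (rule mult_right_mono) (linarith, simp)
  moreover have "hn (Tsg (s n) (zz n)) \<le> K * hn (zz n)" using K zz(1) by blast
  ultimately show False using zz(2)[of n] by linarith
qed

text \<open>Boundedness near 0 propagates to multiples of the step by the semigroup law.\<close>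
lemma bounded_on_multiples:
  assumes \<delta>: "\<delta> > 0" and M: "M \<ge> 1" and bd: "\<forall>s\<in>{0..\<delta>}. \<forall>z\<in>H. hn (Tsg s z) \<le> M * hn z"
  shows "\<forall>s\<in>{0..real k * \<delta>}. \<forall>z\<in>H. hn (Tsg s z) \<le> M ^ (k + 1) * hn z"
proof (induction k)
  case 0
  show ?case using T_0 mult_right_mono[OF M hnorm_nonneg] by simp
next
  case (Suc k)
  show ?case
  proof (intro ballI)
    fix s z assume s: "s \<in> {0..real (Suc k) * \<delta>}" and z: "z \<in> H"
    have pow: "M \<le> M ^ (Suc k + 1)" "M ^ (k + 1) \<le> M ^ (Suc k + 1)"
      using power_increasing[of 1 "Suc k + 1" M] power_increasing[of "k + 1" "Suc k + 1" M] M
      by simp_all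
    show "hn (Tsg s z) \<le> M ^ (Suc k + 1) * hn z"
    proof (cases "s \<le> \<delta>")
      case True
      then have "hn (Tsg s z) \<le> M * hn z" using bd s z by simp
      also have "\<dots> \<le> M ^ (Suc k + 1) * hn z" using pow by (simp add: mult_right_mono)
      finally show ?thesis .
    next
      case False
      then have s': "s - \<delta> \<in> {0..real k * \<delta>}" using s by (auto simp: algebra_simps)
      have "Tsg s z = Tsg \<delta> (Tsg (s - \<delta>) z)" using T_semi[of \<delta> "s - \<delta>" z] \<delta> False z by simp
      then have "hn (Tsg s z) \<le> M * hn (Tsg (s - \<delta>) z)" using bd \<delta> T_in s' z by simp
      also have "\<dots> \<le> M * (M ^ (k + 1) * hn z)" using Suc.IH s' z M by (simp add: mult_left_mono)
      finally show ?thesis by (simp add: mult.assoc)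
    qed
  qed
qed

lemma bounded_on_interval: "\<exists>M\<ge>1. \<forall>s\<in>{0..t}. \<forall>z\<in>H. hn (Tsg s z) \<le> M * hn z"
proof -
  obtain \<delta> M where \<delta>: "\<delta> > 0" and bd: "\<forall>s\<in>{0..\<delta>}. \<forall>z\<in>H. hn (Tsg s z) \<le> M * hn z"
    using bounded_near_zero by blast
  have bd1: "\<forall>s\<in>{0..\<delta>}. \<forall>z\<in>H. hn (Tsg s z) \<le> max M 1 * hn z"
    using bd by (meson max.cobounded1 mult_right_mono hnorm_nonneg order_trans)
  obtain k :: nat where "t / \<delta> < real k" using reals_Archimedean2 by blast
  then have "{0..t} \<subseteq> {0..real k * \<delta>}" using \<delta> by (auto simp: field_simps)
  then have "\<forall>s\<in>{0..t}. \<forall>z\<in>H. hn (Tsg s z) \<le> max M 1 ^ (k + 1) * hn z"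
    using bounded_on_multiples[OF \<delta> _ bd1, of k] by auto
  then show ?thesis by (metis max.cobounded2 one_le_power)
qed

lemma generator_commutes:
  assumes z: "z \<in> Dom" and t: "t \<ge> 0"
  shows "Tsg t z \<in> Dom" and "G (Tsg t z) = Tsg t (G z)"
proof -
  have zH: "z \<in> H" and GzH: "G z \<in> H" using Dom_H G_H z by blast+
  define y where "y = Tsg t z"
  have yH: "y \<in> H" and TGH: "Tsg t (G z) \<in> H" using T_in t zH GzH by (simp_all add: y_def)
  obtain K where K: "\<And>w. w \<in> H \<Longrightarrow> hn (Tsg t w) \<le> K * hn w"
    using bounded_energy_op_bound[OF T_bounded_op[OF t]] by metis
  define q where "q h = (1 / h) *\<^sub>R (Tsg h z - z)" for h
  have qH: "h > 0 \<Longrightarrow> q h \<in> H" for h unfolding q_def using T_in zH by (simp add: Hsp_diff Hsp_scaleR)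
  have quot: "(1 / h) *\<^sub>R (Tsg h y - y) - Tsg t (G z) = Tsg t (q h - G z)" if h: "h > 0" for h
  proof -
    have hz: "Tsg h z \<in> H" using T_in h zH by simp
    have "Tsg h y = Tsg t (Tsg h z)"
      using T_semi[of h t z] T_semi[of t h z] h t zH by (simp add: y_def add.commute)
    moreover have "Tsg t (q h) = (1 / h) *\<^sub>R (Tsg t (Tsg h z) - Tsg t z)"
      unfolding q_def using T_scaleR[OF t Hsp_diff[OF hz zH]] T_diff[OF t hz zH] by simp
    ultimately show ?thesis using T_diff[OF t qH[OF h] GzH] by (simp add: y_def)
  qed
  have pH: "\<forall>\<^sub>F h in at_right 0. (1 / h) *\<^sub>R (Tsg h y - y) \<in> H"
    using eventually_at_right_less[of 0]
    by (rule eventually_mono) (intro Hsp_scaleR Hsp_diff T_in yH, simp_all)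
  have "norm (hn ((1 / h) *\<^sub>R (Tsg h y - y) - Tsg t (G z))) \<le> K * hn (q h - G z)" if "h > 0" for h
    unfolding quot[OF that] using K[OF Hsp_diff[OF qH[OF that] GzH]] by simp
  then have "\<forall>\<^sub>F h in at_right 0. norm (hn ((1 / h) *\<^sub>R (Tsg h y - y) - Tsg t (G z))) \<le> K * hn (q h - G z)"
    using eventually_at_right_less[of 0] by (rule eventually_mono[rotated]) simp
  then have lim: "((\<lambda>h. hn ((1 / h) *\<^sub>R (Tsg h y - y) - Tsg t (G z))) \<longlongrightarrow> 0) (at_right 0)"
    by (rule Lim_null_comparison) (use G_lim[OF z] in \<open>simp add: q_def tendsto_mult_right_zero\<close>)
  then have yD: "y \<in> Dom" unfolding Dom_eq using yH TGH by blast
  then show "Tsg t z \<in> Dom" by (simp add: y_def)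
  show "G (Tsg t z) = Tsg t (G z)"
    using hnorm_limit_unique[OF _ pH G_H[OF yD] TGH G_lim[OF yD] lim] by (simp add: y_def)
qed

text \<open>To the right of t the difference quotient is the forward quotient at T(t) z, an
  element of the domain.\<close>
lemma orbit_right_derivative:
  assumes z: "z \<in> Dom" and t: "t \<ge> 0"
  shows "((\<lambda>s. hn ((1 / (s - t)) *\<^sub>R (Tsg s z - Tsg t z) - G (Tsg t z))) \<longlongrightarrow> 0) (at_right t)"
proof -
  define y where "y = Tsg t z"
  have "((\<lambda>h. hn ((1 / h) *\<^sub>R (Tsg h y - y) - G y)) \<longlongrightarrow> 0) (at_right 0)"
    using G_lim generator_commutes(1)[OF z t] by (simp add: y_def)
  then have lim: "((\<lambda>s. hn ((1 / (s - t)) *\<^sub>R (Tsg (s - t) y - y) - G y)) \<longlongrightarrow> 0) (at_right t)"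
    by (simp add: filterlim_at_right_to_0[of _ _ t])
  have "\<forall>\<^sub>F s in at_right t. hn ((1 / (s - t)) *\<^sub>R (Tsg (s - t) y - y) - G y)
      = hn ((1 / (s - t)) *\<^sub>R (Tsg s z - Tsg t z) - G (Tsg t z))"
    using eventually_at_right_less[of t]
  proof (rule eventually_mono)
    fix s assume "t < s"
    then have "Tsg (s - t) y = Tsg s z" using T_semi[of "s - t" t z] Dom_H[OF z] t by (simp add: y_def)
    then show "hn ((1 / (s - t)) *\<^sub>R (Tsg (s - t) y - y) - G y)
      = hn ((1 / (s - t)) *\<^sub>R (Tsg s z - Tsg t z) - G (Tsg t z))" by (simp add: y_def)
  qed
  then show ?thesis using lim by (simp add: tendsto_cong)
qed

lemma left_difference_quotient:
  assumes z: "z \<in> Dom" and s: "0 \<le> s" "s < t"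
  shows "(1 / (s - t)) *\<^sub>R (Tsg s z - Tsg t z) - G (Tsg t z)
    = Tsg s ((1 / (t - s)) *\<^sub>R (Tsg (t - s) z - z) - Tsg (t - s) (G z))"
proof -
  define h where "h = t - s"
  have h: "h > 0" "s + h = t" using s by (simp_all add: h_def)
  have zH: "z \<in> H" and GzH: "G z \<in> H" using Dom_H G_H z by blast+
  have hz: "Tsg h z \<in> H" and hGH: "Tsg h (G z) \<in> H" using h T_in zH GzH by simp_all
  have qH: "(1 / h) *\<^sub>R (Tsg h z - z) \<in> H" using hz zH by (simp add: Hsp_diff Hsp_scaleR)
  have tz: "Tsg t z = Tsg s (Tsg h z)" using T_semi[of s h z] h s zH by simp
  have Gt: "G (Tsg t z) = Tsg s (Tsg h (G z))"
    using generator_commutes(2)[OF z] T_semi[of s h "G z"] h s GzH by simp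
  have c: "1 / (s - t) = - (1 / h)" using s by (simp add: h_def field_simps)
  have "Tsg s ((1 / h) *\<^sub>R (Tsg h z - z)) = (1 / h) *\<^sub>R (Tsg t z - Tsg s z)"
    using tz zH hz s by (simp add: T_scaleR T_diff Hsp_diff)
  then show ?thesis
    using T_diff[OF s(1) qH hGH] Gt by (simp add: c scaleR_diff_right h_def[symmetric])
qed

text \<open>Hence the left difference quotient tends to the derivative, thanks to the uniform
  bound of T on [0,t].\<close>
lemma orbit_left_derivative:
  assumes z: "z \<in> Dom" and t: "t > 0"
  shows "((\<lambda>s. hn ((1 / (s - t)) *\<^sub>R (Tsg s z - Tsg t z) - G (Tsg t z))) \<longlongrightarrow> 0) (at_left t)"
proof -
  have zH: "z \<in> H" and GzH: "G z \<in> H" using Dom_H G_H z by blast+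
  obtain M where M1: "M \<ge> 1" and M: "\<forall>s\<in>{0..t}. \<forall>w\<in>H. hn (Tsg s w) \<le> M * hn w"
    using bounded_on_interval by blast
  define err where "err h = hn ((1 / h) *\<^sub>R (Tsg h z - z) - G z) + hn (Tsg h (G z) - G z)" for h
  have bound: "hn ((1 / (s - t)) *\<^sub>R (Tsg s z - Tsg t z) - G (Tsg t z)) \<le> M * err (t - s)"
    if s: "0 < s" "s < t" for s
  proof -
    define h where "h = t - s"
    have h: "h > 0" using s by (simp add: h_def)
    have qH: "(1 / h) *\<^sub>R (Tsg h z - z) \<in> H" and hGH: "Tsg h (G z) \<in> H"
      using h T_in zH GzH by (simp_all add: Hsp_diff Hsp_scaleR)
    have "hn (Tsg s ((1 / h) *\<^sub>R (Tsg h z - z) - Tsg h (G z)))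
        \<le> M * hn ((1 / h) *\<^sub>R (Tsg h z - z) - Tsg h (G z))"
      using M s qH hGH Hsp_diff by simp
    moreover have "hn ((1 / h) *\<^sub>R (Tsg h z - z) - Tsg h (G z)) \<le> err h"
      using hnorm_diff_le[OF Hsp_diff[OF qH GzH] Hsp_diff[OF hGH GzH]] by (simp add: err_def)
    ultimately show ?thesis
      unfolding left_difference_quotient[OF z less_imp_le[OF s(1)] s(2)] h_def[symmetric]
      using M1 by (meson mult_left_mono order_trans zero_le_one)
  qed
  have "(err \<longlongrightarrow> 0) (at_right 0)"
    unfolding err_def using tendsto_add[OF G_lim[OF z] T_cont0[OF GzH]] by simp
  then have "((\<lambda>s. err (t - s)) \<longlongrightarrow> 0) (at_left t)"
    by (rule filterlim_compose[OF _ filterlim_reflect_at_left])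
  then have lim: "((\<lambda>s. M * err (t - s)) \<longlongrightarrow> 0) (at_left t)" by (rule tendsto_mult_right_zero)
  have "\<forall>\<^sub>F s in at_left t. norm (hn ((1 / (s - t)) *\<^sub>R (Tsg s z - Tsg t z) - G (Tsg t z))) \<le> M * err (t - s)"
    using eventually_at_left_real[OF t] by (rule eventually_mono) (simp add: bound)
  then show ?thesis by (rule Lim_null_comparison) (rule lim)
qed

lemma orbit_derivative:
  assumes "z \<in> Dom" and "t \<ge> 0"
  shows "has_deriv_N hn (\<lambda>s. Tsg s z) (G (Tsg t z)) t"
  unfolding has_deriv_N_def
  using assms by (intro tendsto_at_nonneg_split orbit_right_derivative orbit_left_derivative)

end

section \<open>The damped system and the constants of assumption (C)\<close>

locale damped_system = energy_semigroup ip VR VT R T a0 Tsg "dom_calA VR R S Dp" "calA R S Dp"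
  for ip :: "'a::{complex_normed_vector,banach} \<Rightarrow> 'a \<Rightarrow> complex"
    and VR VT R T a0 Tsg S Dp +
  fixes Dps :: "'a \<Rightarrow> 'a" and k p q :: real
  assumes S_bdd: "bounded_clinear_op S" and S_sa: "\<forall>x y. ip (S x) y = ip x (S y)"
    and Dp_bdd: "bounded_clinear_op Dp" and Dps_adj: "\<forall>x y. ip (Dp x) y = ip x (Dps y)"
    and delta_pos: "delta_C ip VR R Dp > 0"
    and k_pos: "0 < k" and k_lt: "k < beta_C ip VR R Dp"
    and p_pos: "p > 0" and q_pos: "q > 0" and pq: "p + q \<le> 1"
    and omega1: "omega1' ip VR R S Dp Dps a0 k p q \<ge> 1"
begin

abbreviation (input) "DomA \<equiv> dom_calA VR R S Dp"
abbreviation (input) "opA \<equiv> calA R S Dp"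
abbreviation (input) "\<delta> \<equiv> delta_C ip VR R Dp"
abbreviation (input) "\<beta> \<equiv> beta_C ip VR R Dp"
abbreviation (input) "nS \<equiv> normS_tilde VR R S"
abbreviation (input) "nD \<equiv> normD2 VR R Dp Dps"
abbreviation (input) "\<omega>1 \<equiv> omega1' ip VR R S Dp Dps a0 k p q"
abbreviation (input) "\<omega>2 \<equiv> omega2 ip VR R Dp Dps k"
abbreviation (input) "\<theta> \<equiv> theta' ip VR R S Dp Dps a0 k p q"

sublocale S: linear_on UNIV S by (rule bounded_clinear_op_linear_on[OF S_bdd])
sublocale Dp: linear_on UNIV Dp by (rule bounded_clinear_op_linear_on[OF Dp_bdd])

definition KD :: real where "KD = (SOME K. K \<ge> 0 \<and> (\<forall>x. norm (Dp x) \<le> K * norm x))"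

lemma KD: "KD \<ge> 0" "norm (Dp x) \<le> KD * norm x"
proof -
  have "\<exists>K. K \<ge> 0 \<and> (\<forall>x. norm (Dp x) \<le> K * norm x)"
    using bounded_clinear_op_bound[OF Dp_bdd] by blast
  from someI_ex[OF this] show "KD \<ge> 0" "norm (Dp x) \<le> KD * norm x" unfolding KD_def by auto
qed

lemma Dps_bound: "norm (Dps y) \<le> KD * norm y"
proof -
  have "norm (Dps y) * norm (Dps y) = Re (ip (Dp (Dps y)) y)"
    using Dps_adj Re_ip_self[of "Dps y"] by (simp add: power2_eq_square)
  also have "\<dots> \<le> norm (Dp (Dps y)) * norm y" by (rule Re_ip_le)
  also have "\<dots> \<le> (KD * norm y) * norm (Dps y)"
    using mult_right_mono[OF KD(2)[of "Dps y"] norm_ge_zero[of y]] by (simp add: mult_ac)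
  finally show ?thesis by (cases "Dps y = 0") (use KD in auto)
qed

lemma abs_Re_Dp_le: "\<bar>Re (ip (Dp a) b)\<bar> \<le> KD * norm a * norm b"
  using abs_Re_ip_le[of "Dp a" b] KD(2)[of a] by (meson mult_right_mono norm_ge_zero order_trans)

lemma Re_Dps: "Re (ip (Dps a) b) = Re (ip (Dp b) a)"
  using Dps_adj Re_ip_sym by metis

lemma Re_D1: "Re (ip ((1/2) *\<^sub>C (Dp a + Dps a)) a) = Re (ip (Dp a) a)"
  by (simp add: ip_scaleC_left ip_add_left Re_Dps)

text \<open>S is symmetric, so i S contributes nothing to the real part of the form.\<close>
lemma Re_iS: "Re (ip (\<i> *\<^sub>C S b) b) = 0"
proof -
  have "ip (S b) b = cnj (ip (S b) b)" using S_sa ip_sym[of "S b" b] by metis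
  then have "Im (ip (S b) b) = 0" by (metis Reals_cnj_iff complex_is_Real_iff)
  then show ?thesis by (simp add: ip_scaleC_left)
qed

lemma norm_R_sq_pos: "x \<in> VR - {0} \<Longrightarrow> (norm (R x))\<^sup>2 > 0"
  using R_inj by auto

lemma delta_bound: assumes x: "x \<in> VR" shows "\<delta> * (norm (R x))\<^sup>2 \<le> Re (ip (Dp (R x)) (R x))"
proof (cases "x = 0")
  case False
  have "\<bar>Re (ip (Dp (R y)) (R y))\<bar> \<le> KD * (norm (R y))\<^sup>2" for y
    using abs_Re_Dp_le[of "R y" "R y"] by (simp add: power2_eq_square mult.assoc)
  then show ?thesis unfolding delta_C_def using x False norm_R_sq_pos
    by (intro INF_quotient_le bdd_quotients(2)) auto
qed (simp add: R.map_zero Dp.map_zero)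

lemma Re_D_nonneg: "x \<in> VR \<Longrightarrow> 0 \<le> Re (ip (Dp (R x)) (R x))"
  using delta_bound[of x] delta_pos by (meson order_trans zero_le_mult_iff zero_le_power2 less_imp_le)

lemma beta_bound: assumes x: "x \<in> VR" shows "\<beta> * (norm x)\<^sup>2 \<le> Re (ip (Dp (R x)) (R x))"
proof (cases "x = 0")
  case False
  have "bdd_below ((\<lambda>y. Re (ip (Dp (R y)) (R y)) / (norm y)\<^sup>2) ` (VR - {0}))"
    by (rule bdd_belowI[of _ 0]) (auto intro!: divide_nonneg_nonneg Re_D_nonneg)
  then show ?thesis unfolding beta_C_def using x False by (intro INF_quotient_le) auto
qed (simp add: R.map_zero Dp.map_zero)

lemma S_tilde_bound: assumes x: "x \<in> VR" shows "norm (S (R x)) \<le> nS * norm (R x)"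
proof (cases "x = 0")
  case False
  obtain K where "\<forall>y. norm (S y) \<le> K * norm y" using bounded_clinear_op_bound[OF S_bdd] by blast
  then show ?thesis unfolding normS_tilde_def using x False R_inj
    by (intro SUP_quotient_ge bdd_quotients(1)[where K=K]) auto
qed (simp add: R.map_zero S.map_zero)

lemma D2_bound: assumes x: "x \<in> VR"
  shows "norm ((1 / (2 * \<i>)) *\<^sub>C (Dp (R x) - Dps (R x))) \<le> nD * norm (R x)"
proof (cases "x = 0")
  case True
  then show ?thesis using Dps_bound[of 0] by (simp add: R.map_zero Dp.map_zero)
next
  case False
  have "norm ((1 / (2 * \<i>)) *\<^sub>C (Dp a - Dps a)) \<le> KD * norm a" for a
  proof -
    have "norm ((1 / (2 * \<i>)) *\<^sub>C (Dp a - Dps a)) \<le> (1/2) * (norm (Dp a) + norm (Dps a))"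
      by (simp add: norm_scaleC norm_divide norm_mult norm_triangle_ineq4)
    then show ?thesis using KD(2)[of a] Dps_bound[of a] by simp
  qed
  then show ?thesis unfolding normD2_def using x False R_inj
    by (intro SUP_quotient_ge bdd_quotients(1)[where K=KD]) auto
qed

lemma omega2_bound: assumes x: "x \<in> VR"
  shows "(norm (R x))\<^sup>2 + k * Re (ip (Dp (R x)) (R x)) + k\<^sup>2 * (norm x)\<^sup>2 \<le> \<omega>2 * (norm (R x))\<^sup>2"
proof (cases "x = 0")
  case False
  have "\<bar>(norm (R y))\<^sup>2 + k * Re (ip (Dp (R y)) (R y)) + k\<^sup>2 * (norm y)\<^sup>2\<bar>
        \<le> (1 + k * KD + k\<^sup>2 / a0) * (norm (R y))\<^sup>2" if y: "y \<in> VR" for y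
  proof -
    have "k * Re (ip (Dp (R y)) (R y)) \<le> k * KD * (norm (R y))\<^sup>2"
      using abs_Re_Dp_le[of "R y" "R y"] k_pos by (simp add: power2_eq_square abs_le_iff)
    moreover have "k\<^sup>2 * (norm y)\<^sup>2 = k\<^sup>2 / a0 * (a0 * (norm y)\<^sup>2)" using a0_pos by simp
    moreover have "\<dots> \<le> k\<^sup>2 / a0 * (norm (R y))\<^sup>2"
      using R_coercive_sq[OF y] a0_pos by (intro mult_left_mono) auto
    moreover have "0 \<le> k * Re (ip (Dp (R y)) (R y))" using Re_D_nonneg[OF y] k_pos by simp
    ultimately show ?thesis by (simp add: algebra_simps)
  qed
  then show ?thesis unfolding omega2_def Re_D1 using x False R_inj
    by (intro SUP_quotient_ge bdd_quotients(1)) auto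
qed (simp add: R.map_zero Dp.map_zero)

lemma omega2_ge_1: assumes x: "x \<in> VR" "x \<noteq> 0" shows "\<omega>2 \<ge> 1"
proof -
  have "0 \<le> k * Re (ip (Dp (R x)) (R x))" using Re_D_nonneg[OF x(1)] k_pos by simp
  moreover have "0 \<le> k\<^sup>2 * (norm x)\<^sup>2" by simp
  ultimately have "1 * (norm (R x))\<^sup>2 \<le> \<omega>2 * (norm (R x))\<^sup>2"
    using omega2_bound[OF x(1)] by linarith
  then show ?thesis using norm_R_sq_pos x by (simp add: mult_le_cancel_right)
qed

end

section \<open>The Lyapunov functional\<close>

context damped_system
begin

definition Q :: "'a \<times> 'a \<Rightarrow> 'a \<times> 'a \<Rightarrow> real" where
  "Q x y = Re (ip (fst x) (fst y)) + k * Re (ip (fst x) (snd y)) + k * Re (ip (fst y) (snd x))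
     + Re (ip (R (snd x)) (R (snd y)))
     + k / 2 * (Re (ip (Dp (R (snd x))) (R (snd y))) + Re (ip (Dp (R (snd y))) (R (snd x))))"

definition V :: "'a \<times> 'a \<Rightarrow> real" where "V x = Q x x"

lemma V_eq: "V x = (norm (fst x))\<^sup>2 + 2 * k * Re (ip (fst x) (snd x)) + (norm (R (snd x)))\<^sup>2
    + k * Re (ip (Dp (R (snd x))) (R (snd x)))"
  unfolding V_def Q_def by (simp add: Re_ip_self)

lemma Q_sym: "Q x y = Q y x"
  unfolding Q_def by (simp add: Re_ip_sym[of "fst x"] Re_ip_sym[of "R (snd x)"] algebra_simps)

lemma Q_add_right: "y \<in> H \<Longrightarrow> w \<in> H \<Longrightarrow> Q x (y + w) = Q x y + Q x w"
  unfolding Q_def Hsp_iff by (simp add: R.map_add Dp.map_add ip_add_left ip_add_right algebra_simps)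

lemma Q_scaleR_right: "y \<in> H \<Longrightarrow> Q x (r *\<^sub>R y) = r * Q x y"
  unfolding Q_def Hsp_iff
  by (simp add: R.map_scaleR Dp.map_scaleR ip_scaleR_right ip_scaleR_left algebra_simps)

lemma Q_diff_right: "y \<in> H \<Longrightarrow> w \<in> H \<Longrightarrow> Q x (y - w) = Q x y - Q x w"
  using Q_add_right[of y "(- 1) *\<^sub>R w" x] Q_scaleR_right[of w x "- 1"] Hsp_scaleR[of w "- 1"] by simp

lemma V_quotient:
  assumes x: "x \<in> H" and h: "h \<in> H" and d: "d \<noteq> 0"
  shows "(V (x + d *\<^sub>R h) - V x) / d = 2 * Q x h + d * V h"
proof -
  have dh: "d *\<^sub>R h \<in> H" using h by (rule Hsp_scaleR)
  have "V (x + d *\<^sub>R h) = Q x (x + d *\<^sub>R h) + d * Q h (x + d *\<^sub>R h)"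
    unfolding V_def using Q_add_right[OF x dh] Q_scaleR_right[OF h] Q_sym by metis
  also have "\<dots> = V x + 2 * d * Q x h + d\<^sup>2 * V h"
    using Q_add_right[OF x dh] Q_add_right[OF x dh, of h] Q_scaleR_right[OF h] Q_sym[of h x]
    by (simp add: V_def power2_eq_square algebra_simps)
  finally show ?thesis using d by (simp add: power2_eq_square field_simps)
qed

definition KQ :: real where "KQ = 2 + 2 * k / sqrt a0 + k * KD"

lemma KQ_pos: "KQ > 0"
  unfolding KQ_def using k_pos a0_pos KD(1) by (simp add: add_pos_nonneg)

lemma norm_snd_le: "x \<in> H \<Longrightarrow> norm (snd x) \<le> hn x / sqrt a0"
  using R_coercive[of "snd x"] hnorm_snd[of x] a0_pos by (simp add: Hsp_iff field_simps)

lemma Q_bound: assumes x: "x \<in> H" and y: "y \<in> H" shows "\<bar>Q x y\<bar> \<le> KQ * hn x * hn y"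
proof -
  let ?X = "hn x" and ?Y = "hn y"
  have mono: "a \<le> ?X \<Longrightarrow> b \<le> ?Y \<Longrightarrow> 0 \<le> b \<Longrightarrow> a * b \<le> ?X * ?Y" for a b
    by (rule mult_mono) auto
  have t1: "\<bar>Re (ip (fst x) (fst y))\<bar> \<le> ?X * ?Y"
    using abs_Re_ip_le mono[OF hnorm_fst hnorm_fst] order_trans by fastforce
  have "\<bar>Re (ip (fst x) (snd y))\<bar> \<le> ?X * ?Y / sqrt a0"
    using order_trans[OF abs_Re_ip_le mult_mono[OF hnorm_fst[of x] norm_snd_le[OF y] hnorm_nonneg norm_ge_zero]]
    by simp
  then have t2: "\<bar>k * Re (ip (fst x) (snd y))\<bar> \<le> k * (?X * ?Y / sqrt a0)"
    unfolding abs_mult abs_of_pos[OF k_pos] using k_pos by (intro mult_left_mono) auto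
  have "\<bar>Re (ip (fst y) (snd x))\<bar> \<le> ?X * ?Y / sqrt a0"
    using order_trans[OF abs_Re_ip_le mult_mono[OF hnorm_fst[of y] norm_snd_le[OF x] hnorm_nonneg norm_ge_zero]]
    by (simp add: mult.commute)
  then have t3: "\<bar>k * Re (ip (fst y) (snd x))\<bar> \<le> k * (?X * ?Y / sqrt a0)"
    unfolding abs_mult abs_of_pos[OF k_pos] using k_pos by (intro mult_left_mono) auto
  have t4: "\<bar>Re (ip (R (snd x)) (R (snd y)))\<bar> \<le> ?X * ?Y"
    using abs_Re_ip_le mono[OF hnorm_snd hnorm_snd] order_trans by fastforce
  have D: "\<bar>Re (ip (Dp (R (snd u))) (R (snd v)))\<bar> \<le> KD * (hn u * hn v)" for u v
  proof -
    have "norm (R (snd u)) * norm (R (snd v)) \<le> hn u * hn v"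
      by (rule mult_mono[OF hnorm_snd hnorm_snd hnorm_nonneg norm_ge_zero])
    then show ?thesis
      using abs_Re_Dp_le[of "R (snd u)" "R (snd v)"] mult_left_mono[OF _ KD(1)]
      by (simp add: mult.assoc) (meson order_trans)
  qed
  have D2: "\<bar>Re (ip (Dp (R (snd x))) (R (snd y))) + Re (ip (Dp (R (snd y))) (R (snd x)))\<bar>
      \<le> KD * (?X * ?Y) + KD * (?X * ?Y)"
    using abs_triangle_ineq D[of x y] D[of y x] by (simp add: mult.commute[of ?Y])
  have t5: "\<bar>k / 2 * (Re (ip (Dp (R (snd x))) (R (snd y))) + Re (ip (Dp (R (snd y))) (R (snd x))))\<bar>
      \<le> k / 2 * (KD * (?X * ?Y) + KD * (?X * ?Y))"
    using mult_left_mono[OF D2, of "k / 2"] k_pos by (simp add: abs_mult abs_of_pos[OF k_pos])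
  have "\<bar>Q x y\<bar> \<le> ?X * ?Y + k * (?X * ?Y / sqrt a0) + k * (?X * ?Y / sqrt a0) + ?X * ?Y
      + k / 2 * (KD * (?X * ?Y) + KD * (?X * ?Y))"
    using t1 t2 t3 t4 t5 unfolding Q_def abs_le_iff by linarith
  also have "\<dots> = KQ * ?X * ?Y" unfolding KQ_def by (simp add: field_simps)
  finally show ?thesis .
qed

lemma V_bound: "x \<in> H \<Longrightarrow> \<bar>V x\<bar> \<le> KQ * (hn x)\<^sup>2"
  unfolding V_def using Q_bound[of x x] by (simp add: power2_eq_square mult.assoc)

lemma V_upper: assumes x: "x \<in> H"
  shows "V x \<le> 2 * (norm (fst x))\<^sup>2 + \<omega>2 * (norm (R (snd x)))\<^sup>2"
proof -
  have "2 * k * Re (ip (fst x) (snd x)) \<le> 2 * norm (fst x) * (k * norm (snd x))"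
    using Re_ip_le[of "fst x" "snd x"] k_pos by (simp add: mult_left_mono)
  also have "\<dots> \<le> 1 * (k * norm (snd x))\<^sup>2 + (norm (fst x))\<^sup>2 / 1" by (rule young) simp
  finally show ?thesis
    unfolding V_eq using omega2_bound[of "snd x"] x by (simp add: Hsp_iff power_mult_distrib)
qed

definition c1 :: real where "c1 = 2 + 2 * k\<^sup>2 / a0"

text \<open>Lower bound of V by the energy: here k < beta is used, in the form
  k^2 |x_2|^2 <= k Re(D x_2, x_2).\<close>
lemma V_lower: assumes x: "x \<in> H" shows "(hn x)\<^sup>2 \<le> c1 * V x"
proof -
  define x1 where "x1 = fst x"
  define x2 where "x2 = snd x"
  have x2V: "x2 \<in> VR" using x by (simp add: Hsp_iff x2_def)
  define u where "u = x1 + k *\<^sub>R x2"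
  have nu: "(norm u)\<^sup>2 = (norm x1)\<^sup>2 + 2 * k * Re (ip x1 x2) + k\<^sup>2 * (norm x2)\<^sup>2"
    unfolding u_def norm_add_sq by (simp add: ip_scaleR_right power_mult_distrib)
  have "k * (k * (norm x2)\<^sup>2) \<le> k * (\<beta> * (norm x2)\<^sup>2)"
    using k_lt k_pos by (intro mult_left_mono mult_right_mono) auto
  also have "\<dots> \<le> k * Re (ip (Dp (R x2)) (R x2))"
    using beta_bound[OF x2V] k_pos by (intro mult_left_mono) auto
  finally have "k\<^sup>2 * (norm x2)\<^sup>2 \<le> k * Re (ip (Dp (R x2)) (R x2))"
    by (simp add: power2_eq_square mult.assoc)
  then have Vge: "(norm u)\<^sup>2 + (norm (R x2))\<^sup>2 \<le> V x"
    unfolding V_eq x1_def[symmetric] x2_def[symmetric] using nu by linarith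
  have "(norm (u - k *\<^sub>R x2))\<^sup>2 \<le> 2 * (norm u)\<^sup>2 + 2 * (norm (k *\<^sub>R x2))\<^sup>2"
    using parallelogram[of u "k *\<^sub>R x2"] zero_le_power2[of "norm (u + k *\<^sub>R x2)"] by linarith
  moreover have "x1 = u - k *\<^sub>R x2" unfolding u_def by simp
  ultimately have "(norm x1)\<^sup>2 \<le> 2 * (norm u)\<^sup>2 + 2 * k\<^sup>2 * (norm x2)\<^sup>2"
    using k_pos by (simp add: power_mult_distrib)
  moreover have "2 * k\<^sup>2 * (norm x2)\<^sup>2 = 2 * k\<^sup>2 / a0 * (a0 * (norm x2)\<^sup>2)" using a0_pos by simp
  moreover have "\<dots> \<le> 2 * k\<^sup>2 / a0 * (norm (R x2))\<^sup>2"
    using R_coercive_sq[OF x2V] a0_pos by (intro mult_left_mono) auto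
  ultimately have "(norm x1)\<^sup>2 \<le> 2 * (norm u)\<^sup>2 + 2 * k\<^sup>2 / a0 * (norm (R x2))\<^sup>2" by linarith
  moreover have "0 \<le> 2 * k\<^sup>2 / a0 * (norm u)\<^sup>2" using a0_pos by simp
  moreover have "c1 * ((norm u)\<^sup>2 + (norm (R x2))\<^sup>2) = 2 * (norm u)\<^sup>2 + 2 * k\<^sup>2 / a0 * (norm (R x2))\<^sup>2
      + 2 * (norm (R x2))\<^sup>2 + 2 * k\<^sup>2 / a0 * (norm u)\<^sup>2"
    unfolding c1_def by (simp add: algebra_simps)
  ultimately have "(norm x1)\<^sup>2 + (norm (R x2))\<^sup>2 \<le> c1 * ((norm u)\<^sup>2 + (norm (R x2))\<^sup>2)"
    using zero_le_power2[of "norm (R x2)"] by linarith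
  then have "(hn x)\<^sup>2 \<le> c1 * ((norm u)\<^sup>2 + (norm (R x2))\<^sup>2)"
    unfolding hnorm_sq x1_def x2_def .
  also have "\<dots> \<le> c1 * V x" using Vge a0_pos by (intro mult_left_mono) (auto simp: c1_def)
  finally show ?thesis .
qed

section \<open>Dissipation of the Lyapunov functional\<close>

text \<open>The derivative 2 Q(x, \<A> x) of V along the flow, computed with a = R x_1, b = R x_2.\<close>
lemma Q_opA_eq:
  assumes x: "x \<in> DomA"
  defines "a \<equiv> R (fst x)" and "b \<equiv> R (snd x)"
  shows "2 * Q x (opA x) = - 2 * Re (ip (Dp a) a) - 2 * Re (ip a (\<i> *\<^sub>C S b))
           + 2 * k * (norm (fst x))\<^sup>2 - 2 * k * (norm b)\<^sup>2 - k * Re (ip (Dp a - Dps a) b)"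
proof -
  obtain x1 x2 where xx: "x = (x1, x2)" by (cases x)
  have a: "a = R x1" and b: "b = R x2" unfolding a_def b_def xx by simp_all
  define w where "w = Dp a + (b + \<i> *\<^sub>C S b)"
  have x1: "x1 \<in> VR" and x2: "x2 \<in> VR" and w: "w \<in> VR"
    using x unfolding xx dom_calA_def w_def a b by auto
  have Ax: "opA (x1, x2) = (- R w, x1)" unfolding w_def calA_def a b by simp
  have e1: "Re (ip x1 (- R w)) = - Re (ip a w)"
    using R_sym[OF x1 w] unfolding a by (simp add: ip_minus_right)
  have e2: "Re (ip (- R w) x2) = - Re (ip w b)"
    using R_sym[OF w x2] unfolding b by (simp add: ip_minus_left)
  have e3: "Re (ip a w) = Re (ip (Dp a) a) + Re (ip a b) + Re (ip a (\<i> *\<^sub>C S b))"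
    unfolding w_def by (simp add: ip_add_right Re_ip_sym[of a "Dp a"])
  have e4: "Re (ip w b) = Re (ip (Dp a) b) + (norm b)\<^sup>2"
    unfolding w_def using Re_iS[of b] by (simp add: ip_add_left Re_ip_self)
  have "Q x (opA x) = Re (ip x1 (- R w)) + k * Re (ip x1 x1) + k * Re (ip (- R w) x2) + Re (ip b a)
        + k / 2 * (Re (ip (Dp b) a) + Re (ip (Dp a) b))"
    unfolding xx Q_def Ax a b by simp
  also have "\<dots> = - (Re (ip (Dp a) a) + Re (ip a b) + Re (ip a (\<i> *\<^sub>C S b))) + k * (norm x1)\<^sup>2
      + k * - (Re (ip (Dp a) b) + (norm b)\<^sup>2) + Re (ip a b)
      + k / 2 * (Re (ip (Dps a) b) + Re (ip (Dp a) b))"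
    by (simp only: e1 e2 e3 e4 Re_ip_self Re_Dps Re_ip_sym[of b a])
  finally show ?thesis unfolding xx by (simp add: ip_diff_left algebra_simps)
qed

text \<open>The three estimates of the dissipation: D >= delta on H_1, |S~| <= nS, |D_2| <= nD.\<close>
lemma dissipation_raw:
  assumes x: "x \<in> DomA"
  defines "\<alpha> \<equiv> norm (R (fst x))" and "\<beta>' \<equiv> norm (R (snd x))"
  shows "2 * Q x (opA x) \<le> - 2 * \<delta> * \<alpha>\<^sup>2 + 2 * (nS * \<alpha>) * \<beta>' + 2 * k * (norm (fst x))\<^sup>2
           - 2 * k * \<beta>'\<^sup>2 + k * (2 * (nD * \<alpha>) * \<beta>')"
proof -
  define a where "a = R (fst x)"
  define b where "b = R (snd x)"
  have x1: "fst x \<in> VR" and x2: "snd x \<in> VR" using x unfolding dom_calA_def by auto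
  have i: "\<delta> * \<alpha>\<^sup>2 \<le> Re (ip (Dp a) a)" using delta_bound[OF x1] by (simp add: a_def \<alpha>_def)
  have "- Re (ip a (\<i> *\<^sub>C S b)) \<le> norm a * norm (S b)"
    using abs_Re_ip_le[of a "\<i> *\<^sub>C S b"] by (simp add: norm_scaleC)
  also have "\<dots> \<le> norm a * (nS * norm b)"
    using S_tilde_bound[OF x2] by (simp add: b_def mult_left_mono)
  finally have ii: "- Re (ip a (\<i> *\<^sub>C S b)) \<le> nS * \<alpha> * \<beta>'" by (simp add: \<alpha>_def \<beta>'_def a_def b_def mult_ac)
  have "Dp a - Dps a = (2 * \<i>) *\<^sub>C ((1 / (2 * \<i>)) *\<^sub>C (Dp a - Dps a))"
    by (simp add: scaleC_scaleC scaleC_one)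
  then have "- Re (ip (Dp a - Dps a) b) \<le> 2 * norm ((1 / (2 * \<i>)) *\<^sub>C (Dp a - Dps a)) * norm b"
    using abs_Re_ip_le[of "Dp a - Dps a" b] by (simp add: norm_scaleC norm_mult)
  also have "\<dots> \<le> 2 * (nD * norm a) * norm b"
    using D2_bound[OF x1] by (simp add: a_def mult_right_mono)
  finally have "- Re (ip (Dp a - Dps a) b) \<le> 2 * (nD * \<alpha>) * \<beta>'"
    by (simp add: \<alpha>_def \<beta>'_def a_def b_def)
  then have "k * (- Re (ip (Dp a - Dps a) b)) \<le> k * (2 * (nD * \<alpha>) * \<beta>')"
    using k_pos by (intro mult_left_mono) auto
  then show ?thesis using Q_opA_eq[OF x] i ii by (simp add: a_def b_def \<beta>'_def algebra_simps)
qed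

text \<open>Young's inequality with weights p and q absorbs the cross terms; omega_1' collects
  what is left of the coercive part.\<close>
lemma dissipation_bound:
  assumes x: "x \<in> DomA"
  shows "2 * Q x (opA x) \<le> - 2 * k * (\<omega>1 - 1) * (norm (fst x))\<^sup>2
           - 2 * k * (1 - p - q) * (norm (R (snd x)))\<^sup>2"
proof -
  define \<alpha> where "\<alpha> = norm (R (fst x))"
  define \<beta>' where "\<beta>' = norm (R (snd x))"
  define n1 where "n1 = norm (fst x)"
  have pk: "2 * p * k > 0" using p_pos k_pos by simp
  have y1: "2 * (nS * \<alpha>) * \<beta>' \<le> (2 * p * k) * \<beta>'\<^sup>2 + (nS * \<alpha>)\<^sup>2 / (2 * p * k)"
    by (rule young[OF pk])
  have y2: "k * (2 * (nD * \<alpha>) * \<beta>') \<le> k * ((2 * q) * \<beta>'\<^sup>2 + (nD * \<alpha>)\<^sup>2 / (2 * q))"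
    using young[of "2 * q" "nD * \<alpha>" \<beta>'] q_pos k_pos by (intro mult_left_mono) auto
  define A where "A = 2 * \<delta> - nS\<^sup>2 / (2 * p * k) - k * nD\<^sup>2 / (2 * q)"
  have "- A * \<alpha>\<^sup>2 + 2 * k * n1\<^sup>2 - 2 * k * (1 - p - q) * \<beta>'\<^sup>2
      = - 2 * \<delta> * \<alpha>\<^sup>2 + ((2 * p * k) * \<beta>'\<^sup>2 + (nS * \<alpha>)\<^sup>2 / (2 * p * k)) + 2 * k * n1\<^sup>2
        - 2 * k * \<beta>'\<^sup>2 + k * ((2 * q) * \<beta>'\<^sup>2 + (nD * \<alpha>)\<^sup>2 / (2 * q))"
    unfolding A_def using p_pos q_pos k_pos by (simp add: field_simps power_mult_distrib)
  then have s: "2 * Q x (opA x) \<le> - A * \<alpha>\<^sup>2 + 2 * k * n1\<^sup>2 - 2 * k * (1 - p - q) * \<beta>'\<^sup>2"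
    using dissipation_raw[OF x] y1 y2 unfolding \<alpha>_def \<beta>'_def n1_def by linarith
  have Aeq: "A = 2 * k * \<omega>1 / a0"
    unfolding A_def omega1'_def using a0_pos k_pos p_pos q_pos by (simp add: field_simps power2_eq_square)
  have "a0 * n1\<^sup>2 \<le> \<alpha>\<^sup>2" using R_coercive_sq x by (simp add: n1_def \<alpha>_def dom_calA_def split: prod.splits)
  moreover have "A \<ge> 0" using Aeq omega1 a0_pos k_pos by simp
  ultimately have "A * (a0 * n1\<^sup>2) \<le> A * \<alpha>\<^sup>2" by (rule mult_left_mono)
  moreover have "2 * k * \<omega>1 * n1\<^sup>2 = A * (a0 * n1\<^sup>2)" using Aeq a0_pos by simp
  ultimately have "- A * \<alpha>\<^sup>2 \<le> - 2 * k * \<omega>1 * n1\<^sup>2" by linarith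
  then show ?thesis using s by (simp add: n1_def \<beta>'_def algebra_simps)
qed

text \<open>The Lyapunov inequality dV/dt <= -2 k theta' V, valid when the energy space is nontrivial
  (so that omega_2 >= 1).\<close>
lemma lyapunov_inequality:
  assumes x: "x \<in> DomA" and nontriv: "\<exists>v\<in>VR. v \<noteq> 0"
  shows "2 * Q x (opA x) \<le> - 2 * k * \<theta> * V x"
proof -
  define n1 where "n1 = norm (fst x)"
  define \<beta>' where "\<beta>' = norm (R (snd x))"
  have w2: "\<omega>2 \<ge> 1" using nontriv omega2_ge_1 by blast
  have "\<theta> \<le> (\<omega>1 - 1) / 2" unfolding theta'_def by (rule min.cobounded1)
  then have th1: "2 * \<theta> \<le> \<omega>1 - 1" by (simp add: field_simps)
  have "\<theta> \<le> (1 - p - q) / \<omega>2" unfolding theta'_def by (rule min.cobounded2)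
  then have th2: "\<theta> * \<omega>2 \<le> 1 - p - q" using w2 by (simp add: le_divide_eq)
  have th0: "\<theta> \<ge> 0" unfolding theta'_def using omega1 pq w2 by simp
  have "- 2 * k * (\<omega>1 - 1) * n1\<^sup>2 \<le> - 2 * k * \<theta> * (2 * n1\<^sup>2)"
    using mult_left_mono[OF th1, of "k * n1\<^sup>2"] k_pos by (simp add: algebra_simps)
  moreover have "- 2 * k * (1 - p - q) * \<beta>'\<^sup>2 \<le> - 2 * k * \<theta> * (\<omega>2 * \<beta>'\<^sup>2)"
    using mult_left_mono[OF th2, of "k * \<beta>'\<^sup>2"] k_pos by (simp add: algebra_simps)
  moreover have "- 2 * k * \<theta> * (2 * n1\<^sup>2 + \<omega>2 * \<beta>'\<^sup>2) \<le> - 2 * k * \<theta> * V x"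
    using V_upper Dom_H[OF x] k_pos th0 by (simp add: n1_def \<beta>'_def mult_left_mono)
  ultimately show ?thesis using dissipation_bound[OF x] by (simp add: n1_def \<beta>'_def algebra_simps)
qed

lemma V_derivative:
  assumes z: "z \<in> DomA" and t: "t \<ge> 0"
  shows "((\<lambda>s. V (Tsg s z)) has_real_derivative 2 * Q (Tsg t z) (opA (Tsg t z))) (at t within {0..})"
proof -
  define x where "x = Tsg t z"
  define x' where "x' = opA x"
  have zH: "z \<in> H" and xH: "x \<in> H" and x'H: "x' \<in> H"
    using Dom_H[OF z] Dom_H G_H generator_commutes(1)[OF z t] by (auto simp: x_def x'_def)
  define qv where "qv s = (1 / (s - t)) *\<^sub>R (Tsg s z - x)" for s
  define e where "e s = hn (qv s - x')" for s
  have e0: "(e \<longlongrightarrow> 0) (at t within {0..})"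
    using orbit_derivative[OF z t] unfolding has_deriv_N_def e_def qv_def x_def x'_def .
  define B where "B s = 2 * KQ * hn x * e s + \<bar>s - t\<bar> * KQ * (e s + hn x')\<^sup>2" for s
  have bound: "\<bar>(V (Tsg s z) - V x) / (s - t) - 2 * Q x x'\<bar> \<le> B s" if s: "s \<ge> 0" "s \<noteq> t" for s
  proof -
    have qvH: "qv s \<in> H" unfolding qv_def using T_in s zH xH by (simp add: Hsp_diff Hsp_scaleR)
    have "Tsg s z = x + (s - t) *\<^sub>R qv s" using s by (simp add: qv_def)
    then have eq: "(V (Tsg s z) - V x) / (s - t) - 2 * Q x x' = 2 * Q x (qv s - x') + (s - t) * V (qv s)"
      using V_quotient[OF xH qvH, of "s - t"] s Q_diff_right[OF qvH x'H] by simp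
    have b1: "\<bar>2 * Q x (qv s - x')\<bar> \<le> 2 * KQ * hn x * e s"
      using Q_bound[OF xH Hsp_diff[OF qvH x'H]] by (simp add: e_def)
    have "hn (qv s) \<le> e s + hn x'"
      using hnorm_triangle[OF Hsp_diff[OF qvH x'H] x'H] by (simp add: e_def)
    then have "(hn (qv s))\<^sup>2 \<le> (e s + hn x')\<^sup>2" by (rule power_mono) simp
    then have "\<bar>V (qv s)\<bar> \<le> KQ * (e s + hn x')\<^sup>2"
      using V_bound[OF qvH] mult_left_mono[of _ _ KQ] KQ_pos by (meson less_imp_le order_trans)
    then have b2: "\<bar>(s - t) * V (qv s)\<bar> \<le> \<bar>s - t\<bar> * KQ * (e s + hn x')\<^sup>2"
      by (simp add: abs_mult mult_left_mono mult.assoc)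
    show ?thesis unfolding B_def eq
      using abs_triangle_ineq[of "2 * Q x (qv s - x')" "(s - t) * V (qv s)"] b1 b2 by linarith
  qed
  have "(B \<longlongrightarrow> 2 * KQ * hn x * 0 + \<bar>t - t\<bar> * KQ * (0 + hn x')\<^sup>2) (at t within {0..})"
    unfolding B_def by (intro tendsto_intros e0)
  then have "(B \<longlongrightarrow> 0) (at t within {0..})" by simp
  then have "((\<lambda>s. (V (Tsg s z) - V x) / (s - t) - 2 * Q x x') \<longlongrightarrow> 0) (at t within {0..})"
    by (rule Lim_null_comparison[rotated]) (auto simp: eventually_at_filter intro!: always_eventually bound)
  then show ?thesis
    unfolding has_field_derivative_iff x'_def x_def by (rule LIM_zero_cancel)
qed

lemma energy_decay:
  assumes z: "z \<in> DomA" and t: "t \<ge> 0"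
  shows "(hn (Tsg t z))\<^sup>2 \<le> c1 * KQ * exp (- 2 * k * \<theta> * t) * (hn z)\<^sup>2"
proof (cases "\<exists>v\<in>VR. v \<noteq> 0")
  case True
  have zH: "z \<in> H" using Dom_H[OF z] .
  have "V (Tsg t z) \<le> exp (- (2 * k * \<theta>) * t) * V (Tsg 0 z)"
    using V_derivative[OF z] lyapunov_inequality[OF generator_commutes(1)[OF z] True] t
    by (intro decay_comparison[where g' = "\<lambda>s. 2 * Q (Tsg s z) (opA (Tsg s z))"]) auto
  also have "\<dots> \<le> exp (- (2 * k * \<theta>) * t) * (KQ * (hn z)\<^sup>2)"
    using V_bound[OF zH] T_0[OF zH] by (intro mult_left_mono) auto
  finally have "c1 * V (Tsg t z) \<le> c1 * (exp (- (2 * k * \<theta>) * t) * (KQ * (hn z)\<^sup>2))"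
    using a0_pos by (intro mult_left_mono) (auto simp: c1_def)
  then show ?thesis using V_lower[OF T_in[OF t zH]] by (simp add: mult_ac)
next
  case False
  then have "Tsg t z = 0"
    using generator_commutes(1)[OF z t] by (cases "Tsg t z") (auto simp: dom_calA_def zero_prod_def)
  moreover have "0 \<le> c1 * KQ * exp (- 2 * k * \<theta> * t) * (hn z)\<^sup>2"
    using KQ_pos a0_pos by (simp add: c1_def)
  ultimately show ?thesis by simp
qed

section \<open>Solutions of the second-order equation\<close>

text \<open>The components of an orbit are differentiable, u in H_1 and u' in H: each component of
  the difference quotient is dominated by its energy norm.\<close>
lemma orbit_components_derivative:
  assumes z: "z \<in> DomA" and t: "t \<ge> 0"
  shows "has_deriv_N (\<lambda>x. norm (R x)) (\<lambda>s. snd (Tsg s z)) (fst (Tsg t z)) t"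
    and "has_deriv_N norm (\<lambda>s. fst (Tsg s z)) (fst (opA (Tsg t z))) t"
proof -
  define E where "E s = (1 / (s - t)) *\<^sub>R (Tsg s z - Tsg t z) - opA (Tsg t z)" for s
  have lim: "((\<lambda>s. hn (E s)) \<longlongrightarrow> 0) (at t within {0..})"
    using orbit_derivative[OF z t] unfolding has_deriv_N_def E_def .
  have "snd (E s) = (1 / (s - t)) *\<^sub>R (snd (Tsg s z) - snd (Tsg t z)) - fst (Tsg t z)" for s
    unfolding E_def by (simp add: calA_def)
  then show "has_deriv_N (\<lambda>x. norm (R x)) (\<lambda>s. snd (Tsg s z)) (fst (Tsg t z)) t"
    unfolding has_deriv_N_def using hnorm_snd[of "E _"]
    by (intro Lim_null_comparison[OF always_eventually lim]) simp
  have "fst (E s) = (1 / (s - t)) *\<^sub>R (fst (Tsg s z) - fst (Tsg t z)) - fst (opA (Tsg t z))" for s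
    unfolding E_def by simp
  then show "has_deriv_N norm (\<lambda>s. fst (Tsg s z)) (fst (opA (Tsg t z))) t"
    unfolding has_deriv_N_def using hnorm_fst[of "E _"]
    by (intro Lim_null_comparison[OF always_eventually lim]) simp
qed

lemma orbit_solves:
  assumes z: "z \<in> DomA"
  shows "is_solution VR R S Dp (\<lambda>t. snd (Tsg t z)) (\<lambda>t. fst (Tsg t z)) (\<lambda>t. fst (opA (Tsg t z)))"
  unfolding is_solution_def
proof (intro allI impI conjI)
  fix t :: real assume t: "t \<ge> 0"
  have "Tsg t z \<in> DomA" by (rule generator_commutes(1)[OF z t])
  then show "snd (Tsg t z) \<in> VR" and "fst (Tsg t z) \<in> VR"
    and "Dp (R (fst (Tsg t z))) + (R (snd (Tsg t z)) + \<i> *\<^sub>C S (R (snd (Tsg t z)))) \<in> VR"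
    by (auto simp: dom_calA_def split: prod.splits)
  show "has_deriv_N (\<lambda>x. norm (R x)) (\<lambda>t. snd (Tsg t z)) (fst (Tsg t z)) t"
    and "has_deriv_N norm (\<lambda>t. fst (Tsg t z)) (fst (opA (Tsg t z))) t"
    using orbit_components_derivative[OF z t] by simp_all
  show "fst (opA (Tsg t z)) + R (Dp (R (fst (Tsg t z))) + (R (snd (Tsg t z)) + \<i> *\<^sub>C S (R (snd (Tsg t z))))) = 0"
    by (simp add: calA_def)
qed

lemma decay_of_solutions:
  "\<exists>C>0. \<forall>u1 u0. (u1, u0) \<in> DomA \<longrightarrow>
     (\<forall>t\<ge>0. Tsg t (u1, u0) \<in> DomA) \<and>
     (\<forall>t\<ge>0. has_deriv_N hn (\<lambda>s. Tsg s (u1, u0)) (opA (Tsg t (u1, u0))) t) \<and>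
     (\<exists>u' u''. is_solution VR R S Dp (\<lambda>t. snd (Tsg t (u1, u0))) u' u'' \<and>
        snd (Tsg 0 (u1, u0)) = u0 \<and> u' 0 = u1 \<and>
        (\<forall>t\<ge>0. (norm (R (snd (Tsg t (u1, u0)))))\<^sup>2 + (norm (u' t))\<^sup>2
           \<le> C * exp (- 2 * k * \<theta> * t) * ((norm (R u0))\<^sup>2 + (norm u1)\<^sup>2)))"
proof (intro exI[of _ "c1 * KQ"] conjI allI impI)
  show "0 < c1 * KQ" using KQ_pos a0_pos by (simp add: c1_def add_pos_nonneg)
  fix u1 u0 assume z: "(u1, u0) \<in> DomA"
  have zH: "(u1, u0) \<in> H" by (rule Dom_H[OF z])
  show "Tsg t (u1, u0) \<in> DomA" if "t \<ge> 0" for t by (rule generator_commutes(1)[OF z that])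
  show "has_deriv_N hn (\<lambda>s. Tsg s (u1, u0)) (opA (Tsg t (u1, u0))) t" if "t \<ge> 0" for t
    by (rule orbit_derivative[OF z that])
  show "\<exists>u' u''. is_solution VR R S Dp (\<lambda>t. snd (Tsg t (u1, u0))) u' u'' \<and>
        snd (Tsg 0 (u1, u0)) = u0 \<and> u' 0 = u1 \<and>
        (\<forall>t\<ge>0. (norm (R (snd (Tsg t (u1, u0)))))\<^sup>2 + (norm (u' t))\<^sup>2
           \<le> c1 * KQ * exp (- 2 * k * \<theta> * t) * ((norm (R u0))\<^sup>2 + (norm u1)\<^sup>2))"
  proof (rule exI[of _ "\<lambda>t. fst (Tsg t (u1, u0))"], rule exI[of _ "\<lambda>t. fst (opA (Tsg t (u1, u0)))"],
      intro conjI allI impI)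
    show "is_solution VR R S Dp (\<lambda>t. snd (Tsg t (u1, u0))) (\<lambda>t. fst (Tsg t (u1, u0)))
        (\<lambda>t. fst (opA (Tsg t (u1, u0))))"
      by (rule orbit_solves[OF z])
    show "snd (Tsg 0 (u1, u0)) = u0" and "fst (Tsg 0 (u1, u0)) = u1" using T_0[OF zH] by simp_all
    fix t :: real assume "t \<ge> 0"
    then show "(norm (R (snd (Tsg t (u1, u0)))))\<^sup>2 + (norm (fst (Tsg t (u1, u0))))\<^sup>2
        \<le> c1 * KQ * exp (- 2 * k * \<theta> * t) * ((norm (R u0))\<^sup>2 + (norm u1)\<^sup>2)"
      using energy_decay[OF z] by (simp add: hnorm_sq add.commute)
  qed
qed

end

text \<open>The hypotheses of Theorem 6 instantiate the locale of the damped system.  The operator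
  A enters only through the operator \<A>.\<close>

theorem mainTheorem6:
  fixes ip :: "'a::{complex_normed_vector,banach} \<Rightarrow> 'a \<Rightarrow> complex"
    and VA VT VR :: "'a set" and A T R S Dp Dps :: "'a \<Rightarrow> 'a"
    and a0 k p q :: real
    and Tsg :: "real \<Rightarrow> 'a \<times> 'a \<Rightarrow> 'a \<times> 'a"
  assumes hilbert: "is_cinner ip"
    and A_msect: "m_sectorial ip VA A"
    and a0_pos: "a0 > 0"
    and A_coercive: "\<forall>x\<in>VA. a0 * (norm x)\<^sup>2 \<le> Re (ip (A x) x)"
    and T_sa: "self_adjoint_op ip VT T"
    and T_ge: "\<forall>x\<in>VT. a0 * (norm x)\<^sup>2 \<le> Re (ip (T x) x)"
    and R_sqrt: "is_sqrt_op ip VR R VT T"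
    and S_bdd: "bounded_clinear_op S"
    and S_sa: "\<forall>x y. ip (S x) y = ip x (S y)"
    and A_decomp: "VA = {x \<in> VR. R x + \<i> *\<^sub>C S (R x) \<in> VR}"
    and A_decomp': "\<forall>x\<in>VA. A x = R (R x + \<i> *\<^sub>C S (R x))"
    and Dp_bdd: "bounded_clinear_op Dp"
    and Dps_adj: "\<forall>x y. ip (Dp x) y = ip x (Dps y)"
    and delta_pos: "delta_C ip VR R Dp > 0"
    and beta_pos: "beta_C ip VR R Dp > 0"
    and k_pos: "0 < k" and k_lt: "k < beta_C ip VR R Dp"
    and p_pos: "p > 0" and q_pos: "q > 0" and pq: "p + q \<le> 1"
    and omega1: "omega1' ip VR R S Dp Dps a0 k p q \<ge> 1"
    and Tsg_gen: "generated_by VR R Tsg (dom_calA VR R S Dp) (calA R S Dp)"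
  shows "\<exists>C>0. \<forall>u1 u0. (u1, u0) \<in> dom_calA VR R S Dp \<longrightarrow>
           (\<forall>t\<ge>0. Tsg t (u1, u0) \<in> dom_calA VR R S Dp) \<and>
           (\<forall>t\<ge>0. has_deriv_N (hnorm R) (\<lambda>s. Tsg s (u1, u0)) (calA R S Dp (Tsg t (u1, u0))) t) \<and>
           (\<exists>u' u''. is_solution VR R S Dp (\<lambda>t. snd (Tsg t (u1, u0))) u' u'' \<and>
              snd (Tsg 0 (u1, u0)) = u0 \<and> u' 0 = u1 \<and>
              (\<forall>t\<ge>0. (norm (R (snd (Tsg t (u1, u0)))))\<^sup>2 + (norm (u' t))\<^sup>2
                 \<le> C * exp (- 2 * k * theta' ip VR R S Dp Dps a0 k p q * t)
                     * ((norm (R u0))\<^sup>2 + (norm u1)\<^sup>2)))"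
proof -
  have R: "self_adjoint_op ip VR R" "VT = {x \<in> VR. R x \<in> VR}" "\<forall>x\<in>VT. T x = R (R x)"
    using R_sqrt unfolding is_sqrt_op_def by auto
  interpret damped_system ip VR VT R T a0 Tsg S Dp Dps k p q
  proof unfold_locales
    show "is_cinner ip" by (rule hilbert)
  qed (use R T_sa T_ge a0_pos Tsg_gen S_bdd S_sa Dp_bdd Dps_adj delta_pos k_pos k_lt p_pos q_pos pq omega1
       in auto)
  show ?thesis by (rule decay_of_solutions)
qed

end
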